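(* Under the setting below, for each unit $i$ the output $\tilde{\mathbf Z}^{obs}_i$ of the knockoff construction algorithm (run with the true model parameters) is a knockoff copy of $\mathbf Z^{obs}_i$ in the sense of the knockoff definition below.
   Context: Setting. There are $N$ independent and identically distributed units $i=1,\dots,N$. For unit $i$: $\mathcal B_i$ is a set of item indices and $\mathbf Y_i=\{Y_{ij}:j\in\mathcal B_i\}$ are item responses; $\mathbf Z_i=(Z_{i1},\dots,Z_{ip})^\top$ is the complete predictor vector, each predictor $j$ being continuous (real-valued), binary (values $\{0,1\}$, set $K_j=1$) or ordinal (values $\{0,\dots,K_j\}$, $K_j\ge2$); $\mathcal D\subset\{1,\dots,p\}$ is the set of binary and ordinal predictors; $\mathcal A_i\subset\{1,\dots,p\}$ is the random set of observed predictors and $\mathbf Z^{obs}_i=\{Z_{ij}:j\in\mathcal A_i\}$. Gaussian copula model: $\mathbf Z_i^*\sim N(\mathbf 0,\Sigma)$ with $\Sigma$ a $p\times p$ correlation matrix (unit diagonal) of rank $p$, and $Z_{ij}=F_j(Z^*_{ij})$, where for continuous $j$, $F_j(z)=c_j+d_jz$ with $d_j>0$, and for $j\in\mathcal D$, $F_j(z)=k$ iff $z\in(c_{jk},c_{j,k+1}]$, $k=0,\dots,K_j$, with $c_{j0}=-\infty<c_{j1}<\dots<c_{jK_j}<c_{j,K_j+1}=+\infty$. Latent regression model: a latent $\theta_i$ with $\theta_i\mid\mathbf Z_i\sim N(\beta_0+\sum_{j=1}^p\boldsymbol\beta_j^\top g_j(Z_{ij}),\sigma^2)$, where $g_j(z)=z$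 for continuous or binary $j$ and $g_j(z)=(\mathbb I(z\ge1),\dots,\mathbb I(z\ge K_j))^\top$ for ordinal $j$; given $\theta_i$, the $Y_{ij}$, $j\in\mathcal B_i$, are mutually independent and independent of $\mathbf Z_i$, with known pmfs $P(Y_{ij}=y\mid\theta_i)=h_j(y\mid\theta_i)$. The non-null set is $\mathcal S^*=\{j:\|\boldsymbol\beta_j\|\ne0\}$. Missingness: $\mathcal A_i$ and $\mathbf Y_i$ are conditionally independent given $\mathbf Z_i$, and the SMAR condition holds: with $q(\alpha\mid\mathbf z)$ the conditional pmf of $\mathcal A_i$ given $\mathbf Z_i=\mathbf z$, $q(\alpha\mid\mathbf z)=q(\alpha\mid\mathbf z')$ whenever $z_k=z'_k$ for all $k\in\alpha\cap\mathcal S^*$. Knockoff definition: $\tilde{\mathbf Z}^{obs}_i$ is a knockoff copy of $\mathbf Z^{obs}_i$ if there exist complete vectors $\mathbf Z_i$ and $\tilde{\mathbf Z}_i=(\tilde Z_{i1},\dots,\tilde Z_{ip})^\top$ such that (1) $\mathbf Z^{obs}_i=\{Z_{ij}:j\in\mathcal A_i\}$ and $\tilde{\mathbf Z}^{obs}_i=\{\tilde Z_{ij}:j\in\mathcal A_i\}$; (2) $\tilde{\mathbf Z}_i$, $\mathbf Y_i$ and $\mathcal A_i$ are conditionally independent given $\mathbf Z_i$; (3) $\mathbf Z_i$ follows the Gaussian copula model and $\mathbf Y_i\mid\mathbf Z_i$ follows the latent regression model; (4) for every $\mathcal S\subset\{1,\dots,p\}$, $(\mathbf Z_i,\tilde{\mathbf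 Z}_i)_{\mathrm{swap}(\mathcal S)}$ and $(\mathbf Z_i,\tilde{\mathbf Z}_i)$ have the same distribution, where $\mathrm{swap}(\mathcal S)$ exchanges $Z_{ij}$ and $\tilde Z_{ij}$ for each $j\in\mathcal S$. Knockoff construction algorithm (given the true parameters $\Xi$ of the copula model and $\beta_0,\boldsymbol\beta,\sigma^2$): Step 1, sample $\mathbf Z_i^*$ from its conditional distribution given $\mathbf Z^{obs}_i$ and $\mathbf Y_i$ under the joint model; Step 2, sample $\tilde{\mathbf Z}_i^*$ given $\mathbf Z_i^*$ so that $(\mathbf Z_i^*,\tilde{\mathbf Z}_i^* )\sim N\!\left(\mathbf 0,G\right)$ with $G=\begin{pmatrix}\Sigma&\Sigma-S\\ \Sigma-S&\Sigma\end{pmatrix}$, $S$ a diagonal matrix such that $G$ is positive semidefinite; Step 3, set $\tilde Z_{ij}=F_j(\tilde Z^*_{ij})$, $j=1,\dots,p$; output $\tilde{\mathbf Z}^{obs}_i=\{\tilde Z_{ij}:j\in\mathcal A_i\}$. *)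

theory Defs
  imports "HOL-Probability.Probability"
begin

(* Type of a predictor: continuous, or discrete (binary = K_j = 1, ordinal = K_j >= 2) *)
datatype vtype = Cont | Disc

record 'p copula =
  ty  :: "'p \<Rightarrow> vtype"
  Kn  :: "'p \<Rightarrow> nat"
  cc  :: "'p \<Rightarrow> real"
  dd  :: "'p \<Rightarrow> real"
  thr :: "'p \<Rightarrow> nat \<Rightarrow> real"    (* c_{jk}, k = 1..K_j (discrete) *)
  Sig :: "real^'p^'p"

(* Parameters of the latent regression model; items indexed by the finite type 'q = B_i *)
record ('p,'q) latreg =
  b0  :: real
  bet :: "'p \<Rightarrow> nat \<Rightarrow> real"    (* beta_j: components k = 1..K_j (discrete), component 1 (continuous) *)
  s2  :: real
  hh  :: "'q \<Rightarrow> real \<Rightarrow> nat \<Rightarrow> real" (* h_j(y | theta), responses coded in nat *)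

definition valid_copula :: "'p::finite copula \<Rightarrow> bool" where
  "valid_copula P \<longleftrightarrow>
     (\<forall>j. ty P j = Cont \<longrightarrow> dd P j > 0) \<and>
     (\<forall>j. ty P j = Disc \<longrightarrow> Kn P j \<ge> 1 \<and>
            (\<forall>k. 1 \<le> k \<and> k < Kn P j \<longrightarrow> thr P j k < thr P j (Suc k))) \<and>
     (\<forall>j. Sig P $ j $ j = 1) \<and> transpose (Sig P) = Sig P \<and>
     (\<forall>x. 0 \<le> x \<bullet> (Sig P *v x)) \<and> invertible (Sig P)"

(* F_j ; for discrete j, F_j(z) = k iff z in (c_{jk}, c_{j,k+1}] *)
definition Fj :: "'p::finite copula \<Rightarrow> 'p \<Rightarrow> real \<Rightarrow> real" where
  "Fj P j x = (case ty P j of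
      Cont \<Rightarrow> cc P j + dd P j * x
    | Disc \<Rightarrow> real (card {k \<in> {1..Kn P j}. thr P j k < x}))"

definition Fmap :: "'p::finite copula \<Rightarrow> real^'p \<Rightarrow> real^'p" where
  "Fmap P zs = (\<chi> j. Fj P j (zs $ j))"

definition bidx :: "'p::finite copula \<Rightarrow> 'p \<Rightarrow> nat set" where
  "bidx P j = (case ty P j of Cont \<Rightarrow> {1} | Disc \<Rightarrow> {1..Kn P j})"

definition linpred :: "'p::finite copula \<Rightarrow> ('p,'q) latreg \<Rightarrow> real^'p \<Rightarrow> real" where
  "linpred P R z = b0 R + (\<Sum>j\<in>UNIV. case ty P j of
      Cont \<Rightarrow> bet R j 1 * z $ j
    | Disc \<Rightarrow> (\<Sum>k\<in>{1..Kn P j}. bet R j k * (if z $ j \<ge> real k then 1 else 0)))"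

definition nonnull :: "'p::finite copula \<Rightarrow> ('p,'q) latreg \<Rightarrow> 'p set" where
  "nonnull P R = {j. \<exists>k\<in>bidx P j. bet R j k \<noteq> 0}"

definition valid_latreg :: "('p::finite,'q) latreg \<Rightarrow> bool" where
  "valid_latreg R \<longleftrightarrow> s2 R > 0 \<and>
     (\<forall>j t y. 0 \<le> hh R j t y) \<and> (\<forall>j t. (\<lambda>y. hh R j t y) sums 1) \<and>
     (\<forall>j y. (\<lambda>t. hh R j t y) \<in> borel_measurable borel)"

(* law of Y_i given Z_i = z (theta integrated out; items cond. independent given theta) *)
definition Ylaw :: "'p::finite copula \<Rightarrow> ('p,'q::finite) latreg \<Rightarrow> real^'p \<Rightarrow> ('q \<Rightarrow> nat) measure" where
  "Ylaw P R z = density (count_space UNIV)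
     (\<lambda>y. \<integral>\<^sup>+ t. ennreal ((\<Prod>j\<in>UNIV. hh R j t (y j)) * normal_density (linpred P R z) (sqrt (s2 R)) t) \<partial>lborel)"

definition valid_missing :: "'p::finite copula \<Rightarrow> ('p,'q) latreg \<Rightarrow> (real^'p \<Rightarrow> 'p set \<Rightarrow> real) \<Rightarrow> bool" where
  "valid_missing P R q \<longleftrightarrow>
     (\<forall>z a. 0 \<le> q z a) \<and> (\<forall>z. (\<Sum>a\<in>UNIV. q z a) = 1) \<and>
     (\<forall>a. (\<lambda>z. q z a) \<in> borel_measurable borel) \<and>
     (\<forall>a z z'. (\<forall>k\<in>a \<inter> nonnull P R. z $ k = z' $ k) \<longrightarrow> q z a = q z' a)"

definition Aker :: "(real^'p::finite \<Rightarrow> 'p set \<Rightarrow> real) \<Rightarrow> real^'p \<Rightarrow> 'p set measure" where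
  "Aker q z = density (count_space UNIV) (\<lambda>a. ennreal (q z a))"

definition gauss1 :: "real \<Rightarrow> real measure" where
  "gauss1 v = (if v = 0 then return borel 0 else density lborel (\<lambda>x. ennreal (normal_density 0 (sqrt v) x)))"

definition is_gauss :: "real^'n::finite^'n \<Rightarrow> (real^'n) measure \<Rightarrow> bool" where
  "is_gauss C \<mu> \<longleftrightarrow> prob_space \<mu> \<and> sets \<mu> = sets borel \<and>
     (\<forall>t. distr \<mu> borel (\<lambda>x. t \<bullet> x) = gauss1 (t \<bullet> (C *v t)))"

definition block_G :: "real^'p::finite^'p \<Rightarrow> real^'p^'p \<Rightarrow> real^('p + 'p)^('p + 'p)" where
  "block_G Sg S = (\<chi> a b. case (a, b) of
      (Inl i, Inl j) \<Rightarrow> Sg $ i $ j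
    | (Inl i, Inr j) \<Rightarrow> (Sg - S) $ i $ j
    | (Inr i, Inl j) \<Rightarrow> (Sg - S) $ i $ j
    | (Inr i, Inr j) \<Rightarrow> Sg $ i $ j)"

definition join2 :: "real^'p::finite \<Rightarrow> real^'p \<Rightarrow> real^('p + 'p)" where
  "join2 x y = (\<chi> a. case a of Inl i \<Rightarrow> x $ i | Inr i \<Rightarrow> y $ i)"

(* encoding of {Z_j : j in alpha}: coordinates outside alpha set to 0 (alpha is always carried along) *)
definition mask :: "'p::finite set \<Rightarrow> real^'p \<Rightarrow> real^'p" where
  "mask a z = (\<chi> j. if j \<in> a then z $ j else 0)"

definition swapS :: "'p::finite set \<Rightarrow> (real^'p) \<times> (real^'p) \<Rightarrow> (real^'p) \<times> (real^'p)" where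
  "swapS T zz = (\<chi> j. if j \<in> T then snd zz $ j else fst zz $ j,
                 \<chi> j. if j \<in> T then fst zz $ j else snd zz $ j)"

abbreviation ZS :: "(real^'p::finite) measure" where "ZS \<equiv> borel"
abbreviation YS :: "('q \<Rightarrow> nat) measure" where "YS \<equiv> count_space UNIV"
abbreviation AS :: "'p::finite set measure" where "AS \<equiv> count_space UNIV"

definition truth :: "'p::finite copula \<Rightarrow> ('p,'q::finite) latreg \<Rightarrow> (real^'p \<Rightarrow> 'p set \<Rightarrow> real)
    \<Rightarrow> (real^'p) measure \<Rightarrow> ((real^'p) \<times> 'p set \<times> ('q \<Rightarrow> nat)) measure" where
  "truth P R q NZ = bind NZ (\<lambda>zs. bind (Aker q (Fmap P zs)) (\<lambda>a. bind (Ylaw P R (Fmap P zs))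
      (\<lambda>y. return (ZS \<Otimes>\<^sub>M AS \<Otimes>\<^sub>M YS) (zs, a, y))))"

definition modelZY :: "'p::finite copula \<Rightarrow> ('p,'q::finite) latreg \<Rightarrow> (real^'p) measure
    \<Rightarrow> ((real^'p) \<times> ('q \<Rightarrow> nat)) measure" where
  "modelZY P R NZ = bind NZ (\<lambda>zs. bind (Ylaw P R (Fmap P zs)) (\<lambda>y. return (ZS \<Otimes>\<^sub>M YS) (zs, y)))"

(* K a is a (regular) conditional distribution of Z* given (Z_a, Y) under the joint model *)
definition cond_kernel :: "'p::finite copula \<Rightarrow> ('p,'q::finite) latreg \<Rightarrow> (real^'p) measure
    \<Rightarrow> 'p set \<Rightarrow> ((real^'p) \<times> ('q \<Rightarrow> nat) \<Rightarrow> (real^'p) measure) \<Rightarrow> bool" where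
  "cond_kernel P R NZ a K \<longleftrightarrow>
     K \<in> ZS \<Otimes>\<^sub>M YS \<rightarrow>\<^sub>M prob_algebra ZS \<and>
     distr (modelZY P R NZ) (ZS \<Otimes>\<^sub>M YS \<Otimes>\<^sub>M ZS) (\<lambda>(zs, y). (mask a (Fmap P zs), y, zs)) =
     bind (distr (modelZY P R NZ) (ZS \<Otimes>\<^sub>M YS) (\<lambda>(zs, y). (mask a (Fmap P zs), y)))
          (\<lambda>(zo, y). bind (K (zo, y)) (\<lambda>w. return (ZS \<Otimes>\<^sub>M YS \<Otimes>\<^sub>M ZS) (zo, y, w)))"

definition out_law :: "'p::finite copula \<Rightarrow> ('p,'q::finite) latreg \<Rightarrow> (real^'p \<Rightarrow> 'p set \<Rightarrow> real)
    \<Rightarrow> (real^'p) measure \<Rightarrow> ('p set \<Rightarrow> (real^'p) \<times> ('q \<Rightarrow> nat) \<Rightarrow> (real^'p) measure)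
    \<Rightarrow> (real^'p \<Rightarrow> (real^'p) measure)
    \<Rightarrow> ((real^'p) \<times> 'p set \<times> ('q \<Rightarrow> nat) \<times> (real^'p)) measure" where
  "out_law P R q NZ K1 K2 = bind (truth P R q NZ) (\<lambda>(zs, a, y).
      bind (K1 a (mask a (Fmap P zs), y)) (\<lambda>w. bind (K2 w) (\<lambda>wt.
        return (ZS \<Otimes>\<^sub>M AS \<Otimes>\<^sub>M YS \<Otimes>\<^sub>M ZS) (mask a (Fmap P zs), a, y, mask a (Fmap P wt)))))"

(* Knockoff definition, at the level of the joint law L of (Z^obs, A, Y, tilde Z^obs):
   there is a joint law of complete (Z, tilde Z, Y, A) such that
   (2)+(3): Z ~ Gaussian copula, and given Z, tilde Z, Y, A are conditionally independent
            with Y | Z following the latent regression model;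
   (1): its image under masking is L;  (4): (Z, tilde Z) is swap-invariant. *)
definition is_knockoff :: "'p::finite copula \<Rightarrow> ('p,'q::finite) latreg
    \<Rightarrow> ((real^'p) \<times> 'p set \<times> ('q \<Rightarrow> nat) \<times> (real^'p)) measure \<Rightarrow> bool" where
  "is_knockoff P R L \<longleftrightarrow> (\<exists>\<nu> kt ka.
     is_gauss (Sig P) \<nu> \<and> kt \<in> ZS \<rightarrow>\<^sub>M prob_algebra ZS \<and> ka \<in> ZS \<rightarrow>\<^sub>M prob_algebra AS \<and>
     (let \<mu> = bind (distr \<nu> ZS (Fmap P)) (\<lambda>z. bind (kt z) (\<lambda>zt. bind (Ylaw P R z) (\<lambda>y.
                 bind (ka z) (\<lambda>a. return (ZS \<Otimes>\<^sub>M ZS \<Otimes>\<^sub>M YS \<Otimes>\<^sub>M AS) (z, zt, y, a)))));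
          \<mu>2 = distr \<mu> (ZS \<Otimes>\<^sub>M ZS) (\<lambda>(z, zt, y, a). (z, zt))
      in distr \<mu> (ZS \<Otimes>\<^sub>M AS \<Otimes>\<^sub>M YS \<Otimes>\<^sub>M ZS) (\<lambda>(z, zt, y, a). (mask a z, a, y, mask a zt)) = L \<and>
         (\<forall>T. distr \<mu>2 (ZS \<Otimes>\<^sub>M ZS) (swapS T) = \<mu>2)))"

end

theory Submission
  imports Defs
begin

text \<open>
  The witness for the knockoff definition is the algorithm's own latent vector: \<open>Z = F(Z\<^sup>*)\<close> with
  \<open>Z\<^sup>* \<sim> N(0, \<Sigma>)\<close>, the true missingness mechanism, and as complete knockoff \<open>F(Z\<^sup>~\<^sup>*)\<close>, where
  \<open>Z\<^sup>~\<^sup>*\<close> is obtained by running Steps 1--2 with all predictors observed.  Since Step 1 then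
  reproduces the law of \<open>Z\<^sup>*\<close>, the pair \<open>(Z, Z\<^sup>~)\<close> is the image under \<open>F\<close> of \<open>N(0, G)\<close>; swapping
  coordinates \<open>j\<close> and \<open>p + j\<close> leaves the quadratic form of \<open>G\<close> invariant because \<open>S\<close> is diagonal,
  hence, by the Cram\'er--Wold device, it leaves \<open>N(0, G)\<close> and \<open>(Z, Z\<^sup>~)\<close> invariant.
  For the observed parts, SMAR lets the probability of a missingness pattern \<open>\<alpha>\<close> be computed from
  \<open>Z\<^sub>\<alpha>\<close> alone, so conditioning \<open>Z\<^sup>*\<close> on \<open>(Z\<^sub>\<alpha>, Y)\<close> as the algorithm does, instead of on
  \<open>(Z, Y)\<close>, does not change the joint law of \<open>(Z\<^sub>\<alpha>, \<alpha>, Y, Z\<^sup>~\<^sub>\<alpha>)\<close>.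

  The Cram\'er--Wold device is proved via trigonometric polynomials: measures with the same
  one-dimensional projections have the same characters \<open>x \<mapsto> e\<^sup>i\<^sup>t\<^sup>\<bullet>\<^sup>x\<close>, hence integrate
  polynomials in the coordinates of the torus embedding \<open>x \<mapsto> (cos (\<pi>x/M), sin (\<pi>x/M))\<close>
  equally, and by Stone--Weierstrass all continuous functions of it; this determines the
  measures of compact sets, which the embedding separates for large \<open>M\<close>.
\<close>

subsection \<open>The Cram\'er--Wold device\<close>

definition trig_poly :: "('a::euclidean_space \<Rightarrow> real) \<Rightarrow> bool" where
  "trig_poly h \<longleftrightarrow>
     (\<exists>xs::(complex \<times> 'a) list. \<forall>x. complex_of_real (h x) = (\<Sum>(c, t)\<leftarrow>xs. c * cis (t \<bullet> x)))"

lemma trig_poly_const: "trig_poly (\<lambda>x. c)"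
  unfolding trig_poly_def by (rule exI[of _ "[(complex_of_real c, 0)]"]) simp

lemma trig_poly_add: "trig_poly f \<Longrightarrow> trig_poly g \<Longrightarrow> trig_poly (\<lambda>x. f x + g x)"
  unfolding trig_poly_def by (metis (no_types) of_real_add sum_list_append map_append)

lemma sum_list_mult_sum_list:
  fixes F G :: "_ \<Rightarrow> 'b::comm_semiring_0"
  shows "(\<Sum>p\<leftarrow>xs. F p) * (\<Sum>q\<leftarrow>ys. G q) = (\<Sum>pq\<leftarrow>List.product xs ys. F (fst pq) * G (snd pq))"
  by (induction xs) (simp_all add: algebra_simps sum_list_const_mult o_def)

lemma trig_poly_mult: "trig_poly f \<Longrightarrow> trig_poly g \<Longrightarrow> trig_poly (\<lambda>x. f x * g x)"
  unfolding trig_poly_def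
proof (elim exE)
  fix xs ys :: "(complex \<times> 'a) list"
  assume f: "\<forall>x. complex_of_real (f x) = (\<Sum>(c, t)\<leftarrow>xs. c * cis (t \<bullet> x))"
     and g: "\<forall>x. complex_of_real (g x) = (\<Sum>(c, t)\<leftarrow>ys. c * cis (t \<bullet> x))"
  let ?zs = "map (\<lambda>(p, q). (fst p * fst q, snd p + snd q)) (List.product xs ys)"
  have "complex_of_real (f x * g x) = (\<Sum>(c, t)\<leftarrow>?zs. c * cis (t \<bullet> x))" for x
    by (simp add: f g sum_list_mult_sum_list o_def case_prod_beta cis_mult inner_add_left
        algebra_simps)
  then show "\<exists>zs. \<forall>x. complex_of_real (f x * g x) = (\<Sum>(c, t)\<leftarrow>zs. c * cis (t \<bullet> x))"
    by blast
qed

lemma trig_poly_sum: "finite A \<Longrightarrow> (\<And>a. a \<in> A \<Longrightarrow> trig_poly (f a)) \<Longrightarrow> trig_poly (\<lambda>x. \<Sum>a\<in>A. f a x)"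
  by (induction A rule: finite_induct) (auto intro: trig_poly_add trig_poly_const)

lemma trig_poly_cos_inner: "trig_poly (\<lambda>x. cos (t \<bullet> x))"
  unfolding trig_poly_def
  by (rule exI[of _ "[(1/2, t), (1/2, -t)]"]) (simp add: cis.ctr complex_eq_iff)

lemma trig_poly_sin_inner: "trig_poly (\<lambda>x. sin (t \<bullet> x))"
  unfolding trig_poly_def
  by (rule exI[of _ "[(-\<i>/2, t), (\<i>/2, -t)]"]) (simp add: cis.ctr complex_eq_iff)

lemma borel_measurable_continuous_on_UNIV:
  "continuous_on UNIV f \<Longrightarrow> sets M = sets borel \<Longrightarrow> f \<in> borel_measurable M"
  using borel_measurable_continuous_onI measurable_cong_sets by blast

lemma integrable_bounded_continuous:
  fixes f :: "'a::topological_space \<Rightarrow> 'b::{banach, second_countable_topology}"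
  assumes "finite_measure M" "sets M = sets borel" "continuous_on UNIV f" "\<And>x. norm (f x) \<le> B"
  shows "integrable M f"
  using assms
  by (intro finite_measure.integrable_const_bound[where B=B] borel_measurable_continuous_on_UNIV)
     auto

lemma integral_sum_list_cis:
  fixes M :: "'a::euclidean_space measure"
  assumes "prob_space M" "sets M = sets borel"
  shows "integral\<^sup>L M (\<lambda>x. \<Sum>(c, t)\<leftarrow>xs. c * cis (t \<bullet> x))
       = (\<Sum>(c, t)\<leftarrow>xs. c * integral\<^sup>L M (\<lambda>x. cis (t \<bullet> x)))"
proof (induction xs)
  case (Cons ct xs)
  have int: "integrable M (\<lambda>x. c * cis (t \<bullet> x))" for c t
    using assms
    by (intro integrable_bounded_continuous[where B="norm c"])
       (auto simp: prob_space_def norm_mult intro!: continuous_intros)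
  have "integrable M (\<lambda>x. \<Sum>(c, t)\<leftarrow>xs. c * cis (t \<bullet> x))" for xs :: "(complex \<times> 'a) list"
    by (induction xs) (auto intro: int)
  with int Cons show ?case
    by (cases ct) simp
qed simp

lemma abs_integral_diff_le_uniform:
  fixes f g :: "'a::euclidean_space \<Rightarrow> real"
  assumes N: "prob_space N" "sets N = sets borel"
    and f: "continuous_on UNIV f" "bounded (range f)"
    and g: "continuous_on UNIV g" "bounded (range g)"
    and fg: "\<And>x. \<bar>f x - g x\<bar> \<le> e"
  shows "\<bar>integral\<^sup>L N f - integral\<^sup>L N g\<bar> \<le> e"
proof -
  interpret prob_space N by fact
  have int: "integrable N h" if hc: "continuous_on UNIV h" "bounded (range h)" for h :: "'a \<Rightarrow> real"
  proof -
    obtain B where "\<And>x. norm (h x) \<le> B"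
      using hc(2) unfolding bounded_iff by blast
    then show ?thesis
      by (rule integrable_bounded_continuous[OF finite_measure_axioms N(2) hc(1)])
  qed
  have "\<bar>integral\<^sup>L N f - integral\<^sup>L N g\<bar> = \<bar>integral\<^sup>L N (\<lambda>x. f x - g x)\<bar>"
    using int[OF f] int[OF g] by simp
  also have "\<dots> \<le> integral\<^sup>L N (\<lambda>_. e)"
    using int[OF f] int[OF g] fg by (intro integral_abs_bound_integral) auto
  also have "\<dots> = e"
    by (simp add: prob_space)
  finally show ?thesis .
qed

definition torus_wrap :: "real \<Rightarrow> 'a::euclidean_space \<Rightarrow> 'a \<times> 'a" where
  "torus_wrap M x =
     ((\<Sum>b\<in>Basis. cos (pi * (x \<bullet> b) / M) *\<^sub>R b), (\<Sum>b\<in>Basis. sin (pi * (x \<bullet> b) / M) *\<^sub>R b))"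

lemma continuous_on_torus_wrap: "continuous_on UNIV (torus_wrap M)"
  unfolding torus_wrap_def divide_inverse by (intro continuous_intros)

lemma norm_torus_wrap_le: "norm (torus_wrap M (x::'a::euclidean_space)) \<le> 2 * real DIM('a)"
proof -
  have bound: "norm (\<Sum>b\<in>(Basis::'a set). f b *\<^sub>R b) \<le> real DIM('a)" if "\<And>b. \<bar>f b\<bar> \<le> 1" for f
  proof -
    have "norm (\<Sum>b\<in>(Basis::'a set). f b *\<^sub>R b) \<le> (\<Sum>b\<in>(Basis::'a set). norm (f b *\<^sub>R b))"
      by (rule norm_sum)
    also have "\<dots> \<le> (\<Sum>b\<in>(Basis::'a set). 1)"
      by (intro sum_mono) (simp add: that)
    finally show ?thesis by simp
  qed
  have "norm (torus_wrap M x)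
      \<le> norm (\<Sum>b\<in>(Basis::'a set). cos (pi * (x \<bullet> b) / M) *\<^sub>R b)
        + norm (\<Sum>b\<in>(Basis::'a set). sin (pi * (x \<bullet> b) / M) *\<^sub>R b)"
    unfolding torus_wrap_def by (rule norm_Pair_le)
  also have "\<dots> \<le> real DIM('a) + real DIM('a)"
    by (intro add_mono bound) auto
  finally show ?thesis by simp
qed

lemma torus_wrap_eq_sum:
  "torus_wrap M x
     = (\<Sum>b\<in>Basis. cos ((pi / M) *\<^sub>R b \<bullet> x) *\<^sub>R (b, 0) + sin ((pi / M) *\<^sub>R b \<bullet> x) *\<^sub>R (0, b))"
  unfolding torus_wrap_def by (simp add: prod_eq_iff fst_sum snd_sum inner_commute)

lemma bounded_range_comp_torus_wrap:
  assumes "continuous_on UNIV F"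
  shows "bounded (range (\<lambda>x::'a::euclidean_space. F (torus_wrap M x)))"
proof -
  have "bounded (F ` cball 0 (2 * real DIM('a)))"
    using continuous_on_subset[OF assms subset_UNIV]
    by (intro compact_imp_bounded compact_continuous_image compact_cball)
  moreover have "range (\<lambda>x::'a. F (torus_wrap M x)) \<subseteq> F ` cball 0 (2 * real DIM('a))"
    by (auto intro!: imageI simp: norm_torus_wrap_le)
  ultimately show ?thesis
    by (rule bounded_subset)
qed

lemma trig_poly_polynomial_torus_wrap:
  fixes g :: "'a::euclidean_space \<times> 'a \<Rightarrow> real"
  assumes "real_polynomial_function g"
  shows "trig_poly (\<lambda>x. g (torus_wrap M x))"
  using assms
proof (induction g rule: real_polynomial_function.induct)
  case (linear g)
  then have lin: "linear g"
    by (rule bounded_linear.linear)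
  have "g (torus_wrap M x)
      = (\<Sum>b\<in>Basis. cos ((pi / M) *\<^sub>R b \<bullet> x) * g (b, 0) + sin ((pi / M) *\<^sub>R b \<bullet> x) * g (0, b))" for x
    by (simp only: torus_wrap_eq_sum linear_sum[OF lin] linear_add[OF lin] linear_scale[OF lin]
        real_scaleR_def)
  then show ?case
    by (simp only:) (intro trig_poly_sum trig_poly_add trig_poly_mult trig_poly_cos_inner
        trig_poly_sin_inner trig_poly_const finite_Basis)
next
  case (const c)
  show ?case by (rule trig_poly_const)
next
  case (add f g)
  then show ?case by (intro trig_poly_add)
next
  case (mult f g)
  then show ?case by (intro trig_poly_mult)
qed

text \<open>Each coordinate is wrapped onto a circle of circumference \<open>2 M\<close>, so points at distance
  at most \<open>M\<close> are never identified.\<close>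

lemma torus_wrap_eq_imp_eq:
  fixes x y :: "'a::euclidean_space"
  assumes M: "M > 0" and eq: "torus_wrap M x = torus_wrap M y" and dist: "norm (x - y) \<le> M"
  shows "x = y"
proof (rule euclidean_eqI)
  fix b :: 'a assume b: "b \<in> Basis"
  have "cos (pi * (x \<bullet> b) / M) = cos (pi * (y \<bullet> b) / M)" "sin (pi * (x \<bullet> b) / M) = sin (pi * (y \<bullet> b) / M)"
    using arg_cong[OF eq, of "\<lambda>p. fst p \<bullet> b"] arg_cong[OF eq, of "\<lambda>p. snd p \<bullet> b"] b
    by (simp_all add: torus_wrap_def)
  then obtain n :: int where n: "pi * (x \<bullet> b) / M = pi * (y \<bullet> b) / M + 2 * pi * n"
    using sin_cos_eq_iff by metis
  have "\<bar>x \<bullet> b - y \<bullet> b\<bar> / M \<le> 1"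
    using Basis_le_norm[OF b, of "x - y"] dist M by (simp add: inner_diff_left)
  moreover have "\<bar>pi * (x \<bullet> b) / M - pi * (y \<bullet> b) / M\<bar> = pi * (\<bar>x \<bullet> b - y \<bullet> b\<bar> / M)"
    using M by (simp add: abs_mult diff_divide_distrib[symmetric] right_diff_distrib[symmetric])
  ultimately have "\<bar>2 * pi * n\<bar> \<le> pi * 1"
    using n by (metis add_diff_cancel_left' mult_left_mono pi_ge_zero)
  then have "\<bar>2 * real_of_int n\<bar> \<le> 1"
    by (simp add: abs_mult)
  then have "n = 0"
    by linarith
  then show "x \<bullet> b = y \<bullet> b"
    using n M by simp
qed

lemma tendsto_infdist_cutoff_indicator:
  assumes C: "closed C" "C \<noteq> {}"
  shows "(\<lambda>k. max 0 (1 - real k * infdist p C)) \<longlonglongrightarrow> indicator C p"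
proof (cases "p \<in> C")
  case True
  then show ?thesis
    using in_closed_iff_infdist_zero[OF C] by simp
next
  case False
  then have d_pos: "infdist p C > 0"
    using in_closed_iff_infdist_zero[OF C] infdist_nonneg[of p C] by simp
  obtain N :: nat where N: "1 / infdist p C < real N"
    using reals_Archimedean2 by blast
  have "max 0 (1 - real k * infdist p C) = 0" if "N \<le> k" for k
  proof -
    have "1 / infdist p C < real k"
      using N that by (meson less_le_trans of_nat_le_iff)
    then have "1 < real k * infdist p C"
      using d_pos by (simp add: field_simps)
    then show ?thesis
      by simp
  qed
  then have "(\<lambda>k. max 0 (1 - real k * infdist p C)) \<longlonglongrightarrow> 0"
    by (intro tendsto_eventually) (auto simp: eventually_sequentially)
  then show ?thesis
    using False by simp
qed

lemma tendsto_integral_infdist_cutoff: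
  fixes N :: "'a::euclidean_space measure" and h :: "'a \<Rightarrow> 'b::metric_space"
  assumes N: "prob_space N" "sets N = sets borel"
    and h: "continuous_on UNIV h" and C: "closed C" "C \<noteq> {}"
  shows "(\<lambda>k. \<integral>x. max 0 (1 - real k * infdist (h x) C) \<partial>N) \<longlonglongrightarrow> measure N (h -` C)"
proof -
  interpret prob_space N by (rule N(1))
  have "closed (h -` C)"
    using continuous_closed_vimage[OF C(1)] h continuous_on_eq_continuous_at by blast
  then have "h -` C \<in> sets N"
    using N(2) by simp
  moreover have "(\<lambda>k. \<integral>x. max 0 (1 - real k * infdist (h x) C) \<partial>N) \<longlonglongrightarrow> integral\<^sup>L N (indicator (h -` C))"
  proof (rule integral_dominated_convergence[where w="\<lambda>_. 1"])
    show "(\<lambda>x. max 0 (1 - real k * infdist (h x) C)) \<in> borel_measurable N" for k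
      using N(2) h by (intro borel_measurable_continuous_on_UNIV continuous_intros)
    show "AE x in N. norm (max 0 (1 - real k * infdist (h x) C)) \<le> 1" for k
      using infdist_nonneg[of _ C] by simp
    show "AE x in N. (\<lambda>k. max 0 (1 - real k * infdist (h x) C)) \<longlonglongrightarrow> indicator (h -` C) x"
      using tendsto_infdist_cutoff_indicator[OF C] by (simp add: indicator_def)
  qed (use calculation in auto)
  ultimately show ?thesis
    by simp
qed

lemma open_norm_gt: "open {x::'a::real_normed_vector. c < norm x}"
  by (rule open_Collect_less[OF continuous_on_const continuous_on_norm_id])

lemma tendsto_measure_norm_gt:
  fixes N :: "'a::real_normed_vector measure"
  assumes "prob_space N" "sets N = sets borel"
  shows "(\<lambda>n. measure N {x. real n < norm x}) \<longlonglongrightarrow> 0"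
proof -
  interpret prob_space N by (rule assms(1))
  have not_in: "x \<notin> (\<Inter>n. {x. real n < norm x})" for x
  proof -
    obtain n :: nat where "norm x < real n"
      using reals_Archimedean2 by blast
    then have "x \<notin> {x. real n < norm x}"
      by simp
    then show ?thesis
      by blast
  qed
  then have empty: "(\<Inter>n. {x. real n < norm x}) = {}"
    by blast
  have "(\<lambda>n. measure N {x. real n < norm x}) \<longlonglongrightarrow> measure N (\<Inter>n. {x. real n < norm x})"
  proof (rule finite_Lim_measure_decseq)
    have "{x. real n < norm x} \<in> sets N" for n
      using assms(2) open_norm_gt by simp
    then show "range (\<lambda>n. {x. real n < norm x}) \<subseteq> sets N"
      by auto
    show "decseq (\<lambda>n. {x. real n < norm x})"
      by (auto simp: decseq_def)
  qed
  then show ?thesis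
    by (simp add: empty)
qed

lemma closed_torus_wrap_image: "compact K \<Longrightarrow> closed (torus_wrap M ` K)"
  by (rule compact_imp_closed, rule compact_continuous_image)
     (rule continuous_on_subset[OF continuous_on_torus_wrap subset_UNIV])

lemma closed_vimage_torus_wrap: "closed C \<Longrightarrow> closed (torus_wrap M -` C)"
  using continuous_on_torus_wrap[unfolded continuous_on_eq_continuous_at[OF open_UNIV]]
  by (intro continuous_closed_vimage) auto

lemma vimage_torus_wrap_image_subset:
  assumes r: "\<And>y. y \<in> K \<Longrightarrow> norm y \<le> r" "r \<ge> 0"
  shows "torus_wrap (real n + r + 1) -` torus_wrap (real n + r + 1) ` K \<subseteq> K \<union> {x. real n < norm x}"
proof
  fix x assume "x \<in> torus_wrap (real n + r + 1) -` torus_wrap (real n + r + 1) ` K"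
  then obtain y where y: "y \<in> K" "torus_wrap (real n + r + 1) x = torus_wrap (real n + r + 1) y"
    by auto
  show "x \<in> K \<union> {x. real n < norm x}"
  proof (cases "norm x \<le> real n")
    case True
    then have "norm (x - y) \<le> real n + r + 1"
      using norm_triangle_ineq4[of x y] r(1)[OF y(1)] by linarith
    moreover have "0 < real n + r + 1"
      using r(2) by simp
    ultimately have "x = y"
      by (intro torus_wrap_eq_imp_eq[OF _ y(2)])
    then show ?thesis
      using y(1) by blast
  next
    case False
    then show ?thesis
      by simp
  qed
qed

context
  fixes \<mu> \<nu> :: "'a::euclidean_space measure"
  assumes prob: "prob_space \<mu>" "prob_space \<nu>" and sets: "sets \<mu> = sets borel" "sets \<nu> = sets borel"
    and distr_inner_eq: "\<And>t. distr \<mu> borel (\<lambda>x. t \<bullet> x) = distr \<nu> borel (\<lambda>x. t \<bullet> x)"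
begin

lemma integral_trig_poly_eq:
  assumes "trig_poly h"
  shows "integral\<^sup>L \<mu> h = integral\<^sup>L \<nu> h"
proof -
  obtain xs :: "(complex \<times> 'a) list"
    where xs: "\<And>x. complex_of_real (h x) = (\<Sum>(c, t)\<leftarrow>xs. c * cis (t \<bullet> x))"
    using assms unfolding trig_poly_def by blast
  have cis_meas: "cis \<in> borel_measurable borel"
    by (intro borel_measurable_continuous_on_UNIV continuous_intros) simp
  have "integral\<^sup>L \<mu> (\<lambda>x. cis (t \<bullet> x)) = integral\<^sup>L \<nu> (\<lambda>x. cis (t \<bullet> x))" for t
    using integral_distr[of "\<lambda>x. t \<bullet> x" \<mu> borel cis] integral_distr[of "\<lambda>x. t \<bullet> x" \<nu> borel cis]
    by (simp add: cis_meas measurable_cong_sets[OF sets(1) refl] measurable_cong_sets[OF sets(2) refl]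
        distr_inner_eq)
  then have "integral\<^sup>L \<mu> (\<lambda>x. complex_of_real (h x)) = integral\<^sup>L \<nu> (\<lambda>x. complex_of_real (h x))"
    by (simp only: xs integral_sum_list_cis[OF prob(1) sets(1)] integral_sum_list_cis[OF prob(2) sets(2)])
  then show ?thesis
    by simp
qed

lemma integral_continuous_torus_wrap_eq:
  fixes F :: "'a \<times> 'a \<Rightarrow> real"
  assumes F: "continuous_on UNIV F"
  shows "integral\<^sup>L \<mu> (\<lambda>x. F (torus_wrap M x)) = integral\<^sup>L \<nu> (\<lambda>x. F (torus_wrap M x))"
proof -
  let ?r = "2 * real DIM('a)"
  have cont: "continuous_on UNIV (\<lambda>x. f (torus_wrap M x))" if "continuous_on UNIV f" for f
    using continuous_on_compose[OF continuous_on_torus_wrap continuous_on_subset[OF that]]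
    by (simp add: o_def)
  have "\<bar>integral\<^sup>L \<mu> (\<lambda>x. F (torus_wrap M x)) - integral\<^sup>L \<nu> (\<lambda>x. F (torus_wrap M x))\<bar> \<le> 0 + e"
    if e: "e > 0" for e
  proof -
    obtain g where g: "real_polynomial_function g" and Fg: "\<And>p. p \<in> cball 0 ?r \<Longrightarrow> \<bar>F p - g p\<bar> < e / 2"
      using Stone_Weierstrass_real_polynomial_function[OF compact_cball continuous_on_subset[OF F]] e
      by (metis half_gt_zero subset_UNIV)
    have gc: "continuous_on UNIV g"
      using g continuous_on_polymonial_function real_polynomial_function_eq by blast
    have close: "\<bar>integral\<^sup>L N (\<lambda>x. F (torus_wrap M x)) - integral\<^sup>L N (\<lambda>x. g (torus_wrap M x))\<bar> \<le> e / 2"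
      if "prob_space N" "sets N = sets borel" for N
      using that Fg[OF mem_cball_0[THEN iffD2, OF norm_torus_wrap_le]] F gc
      by (intro abs_integral_diff_le_uniform cont bounded_range_comp_torus_wrap less_imp_le)
    have "integral\<^sup>L \<mu> (\<lambda>x. g (torus_wrap M x)) = integral\<^sup>L \<nu> (\<lambda>x. g (torus_wrap M x))"
      by (intro integral_trig_poly_eq trig_poly_polynomial_torus_wrap g)
    with close[OF prob(1) sets(1)] close[OF prob(2) sets(2)] show ?thesis
      by linarith
  qed
  then have "\<bar>integral\<^sup>L \<mu> (\<lambda>x. F (torus_wrap M x)) - integral\<^sup>L \<nu> (\<lambda>x. F (torus_wrap M x))\<bar> \<le> 0"
    by (rule field_le_epsilon)
  then show ?thesis
    by simp
qed

lemma measure_torus_wrap_vimage_closed_eq: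
  assumes C: "closed C"
  shows "measure \<mu> (torus_wrap M -` C) = measure \<nu> (torus_wrap M -` C)"
proof (cases "C = {}")
  case False
  have "(\<lambda>k. \<integral>x. max 0 (1 - real k * infdist (torus_wrap M x) C) \<partial>\<mu>)
      = (\<lambda>k. \<integral>x. max 0 (1 - real k * infdist (torus_wrap M x) C) \<partial>\<nu>)"
  proof
    fix k
    have "continuous_on UNIV (\<lambda>p. max 0 (1 - real k * infdist p C))"
      by (intro continuous_intros)
    from integral_continuous_torus_wrap_eq[OF this] show "(\<integral>x. max 0 (1 - real k * infdist (torus_wrap M x) C) \<partial>\<mu>)
        = (\<integral>x. max 0 (1 - real k * infdist (torus_wrap M x) C) \<partial>\<nu>)" .
  qed
  then show ?thesis
    using tendsto_integral_infdist_cutoff[OF prob(1) sets(1) continuous_on_torus_wrap C False]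
      tendsto_integral_infdist_cutoff[OF prob(2) sets(2) continuous_on_torus_wrap C False]
    by (metis LIMSEQ_unique)
qed simp

lemma measure_compact_le:
  assumes K: "compact K"
  shows "measure \<mu> K \<le> measure \<nu> K"
proof -
  interpret \<mu>: prob_space \<mu> by (rule prob)
  interpret \<nu>: prob_space \<nu> by (rule prob)
  obtain r where r: "\<And>y. y \<in> K \<Longrightarrow> norm y \<le> r" "r \<ge> 0"
    using compact_imp_bounded[OF K] unfolding bounded_iff by (meson norm_ge_zero order_trans linear)
  define A where "A n = torus_wrap (real n + r + 1) -` torus_wrap (real n + r + 1) ` K" for n :: nat
  have K_sets: "K \<in> sets \<nu>"
    using sets K by (simp add: compact_imp_closed)
  have norm_gt_sets: "{x. real n < norm x} \<in> sets \<nu>" for n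
    using sets open_norm_gt by simp
  have le: "measure \<mu> K \<le> measure \<nu> K + measure \<nu> {x. real n < norm x}" for n
  proof -
    have "measure \<mu> K \<le> measure \<mu> (A n)"
      using closed_vimage_torus_wrap[OF closed_torus_wrap_image[OF K]] sets unfolding A_def
      by (intro \<mu>.finite_measure_mono) (auto simp: borel_closed)
    also have "\<dots> = measure \<nu> (A n)"
      unfolding A_def
      by (intro measure_torus_wrap_vimage_closed_eq closed_torus_wrap_image[OF K])
    also have "\<dots> \<le> measure \<nu> (K \<union> {x. real n < norm x})"
      unfolding A_def
      by (intro \<nu>.finite_measure_mono sets.Un K_sets norm_gt_sets vimage_torus_wrap_image_subset r)
    also have "\<dots> \<le> measure \<nu> K + measure \<nu> {x. real n < norm x}"
      using K_sets norm_gt_sets by (rule measure_Un_le)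
    finally show ?thesis .
  qed
  have "(\<lambda>n. measure \<nu> K + measure \<nu> {x. real n < norm x}) \<longlonglongrightarrow> measure \<nu> K + 0"
    using tendsto_measure_norm_gt[OF prob(2) sets(2)] by (intro tendsto_add tendsto_const)
  then have "measure \<mu> K \<le> measure \<nu> K + 0"
    by (rule LIMSEQ_le_const) (use le in auto)
  then show ?thesis
    by simp
qed

end

theorem cramer_wold:
  fixes \<mu> \<nu> :: "'a::euclidean_space measure"
  assumes prob: "prob_space \<mu>" "prob_space \<nu>" and sets: "sets \<mu> = sets borel" "sets \<nu> = sets borel"
    and distr_inner_eq: "\<And>t. distr \<mu> borel (\<lambda>x. t \<bullet> x) = distr \<nu> borel (\<lambda>x. t \<bullet> x)"
  shows "\<mu> = \<nu>"
proof (rule measure_eqI)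
  interpret \<mu>: prob_space \<mu> by (rule prob)
  interpret \<nu>: prob_space \<nu> by (rule prob)
  have compact: "emeasure \<mu> K = emeasure \<nu> K" if "compact K" for K
    using measure_compact_le[OF prob sets distr_inner_eq that]
      measure_compact_le[OF prob(2,1) sets(2,1) distr_inner_eq[symmetric] that] that sets
    by (simp add: \<mu>.emeasure_eq_measure \<nu>.emeasure_eq_measure compact_imp_closed)
  show "sets \<mu> = sets \<nu>"
    using sets by simp
  fix B assume "B \<in> sets \<mu>"
  then have B: "B \<in> sets borel"
    using sets by simp
  have "emeasure \<mu> B = (SUP K \<in> {K. K \<subseteq> B \<and> compact K}. emeasure \<mu> K)"
    by (rule inner_regular[OF sets(1) _ B]) simp
  also have "\<dots> = (SUP K \<in> {K. K \<subseteq> B \<and> compact K}. emeasure \<nu> K)"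
    by (intro SUP_cong refl) (simp add: compact)
  also have "\<dots> = emeasure \<nu> B"
    by (rule inner_regular[OF sets(2) _ B, symmetric]) simp
  finally show "emeasure \<mu> B = emeasure \<nu> B" .
qed

subsection \<open>Swapping a variable with its knockoff\<close>

definition swap_index :: "'p set \<Rightarrow> 'p + 'p \<Rightarrow> 'p + 'p" where
  "swap_index T a = (case a of
      Inl i \<Rightarrow> if i \<in> T then Inr i else Inl i
    | Inr i \<Rightarrow> if i \<in> T then Inl i else Inr i)"

lemma swap_index_swap_index [simp]: "swap_index T (swap_index T a) = a"
  by (cases a) (auto simp: swap_index_def)

lemma sum_swap_index: "(\<Sum>a\<in>UNIV. f (swap_index T a)) = (\<Sum>a\<in>UNIV. f a)"
  by (rule sum.reindex_bij_witness[of _ "swap_index T" "swap_index T"]) auto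

definition swap_coords :: "'p::finite set \<Rightarrow> real^('p + 'p) \<Rightarrow> real^('p + 'p)" where
  "swap_coords T v = (\<chi> a. v $ swap_index T a)"

lemma inner_swap_coords: "t \<bullet> swap_coords T x = swap_coords T t \<bullet> x"
proof -
  have "t \<bullet> swap_coords T x = (\<Sum>a\<in>UNIV. t $ swap_index T (swap_index T a) * x $ swap_index T a)"
    by (simp add: inner_vec_def swap_coords_def)
  also have "\<dots> = swap_coords T t \<bullet> x"
    unfolding sum_swap_index[of "\<lambda>a. t $ swap_index T a * x $ a"]
    by (simp add: inner_vec_def swap_coords_def)
  finally show ?thesis .
qed

lemma block_G_swap_index:
  assumes "\<forall>i j. i \<noteq> j \<longrightarrow> S $ i $ j = 0"
  shows "block_G Sg S $ swap_index T a $ swap_index T b = block_G Sg S $ a $ b"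
  using assms by (cases a; cases b; auto simp: block_G_def swap_index_def; metis)

lemma quadratic_form_block_G_swap_coords:
  assumes "\<forall>i j. i \<noteq> j \<longrightarrow> S $ i $ j = 0"
  shows "swap_coords T t \<bullet> (block_G Sg S *v swap_coords T t) = t \<bullet> (block_G Sg S *v t)"
proof -
  let ?G = "block_G Sg S"
  have "swap_coords T t \<bullet> (?G *v swap_coords T t)
      = (\<Sum>a\<in>UNIV. t $ swap_index T a * (\<Sum>b\<in>UNIV. ?G $ a $ b * t $ swap_index T b))"
    by (simp add: inner_vec_def swap_coords_def matrix_vector_mult_def)
  also have "\<dots> = (\<Sum>a\<in>UNIV. t $ swap_index T a * (\<Sum>b\<in>UNIV. ?G $ a $ swap_index T b * t $ b))"
    using sum_swap_index[of "\<lambda>b. ?G $ _ $ swap_index T b * t $ b" T] by simp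
  also have "\<dots> = (\<Sum>a\<in>UNIV. t $ a * (\<Sum>b\<in>UNIV. ?G $ swap_index T a $ swap_index T b * t $ b))"
    using sum_swap_index[of "\<lambda>a. t $ a * (\<Sum>b\<in>UNIV. ?G $ swap_index T a $ swap_index T b * t $ b)" T]
    by simp
  also have "\<dots> = t \<bullet> (?G *v t)"
    by (simp add: block_G_swap_index[OF assms] inner_vec_def matrix_vector_mult_def)
  finally show ?thesis .
qed

lemma borel_measurable_vec_lambda:
  assumes "\<And>j. (\<lambda>x. f x j) \<in> borel_measurable M"
  shows "(\<lambda>x. \<chi> j. f x j :: real^'n::finite) \<in> borel_measurable M"
proof (subst borel_measurable_euclidean_space, intro ballI)
  fix i :: "real^'n" assume "i \<in> Basis"
  then obtain j where i: "i = axis j 1"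
    by (auto simp: Basis_vec_def)
  show "(\<lambda>x. (\<chi> j. f x j) \<bullet> i) \<in> borel_measurable M"
    unfolding i cart_eq_inner_axis[symmetric] using assms by simp
qed

lemma swap_coords_measurable [measurable]: "swap_coords T \<in> borel \<rightarrow>\<^sub>M borel"
  unfolding swap_coords_def by (rule borel_measurable_vec_lambda) simp

lemma is_gauss_swap_coords_invariant:
  assumes S: "\<forall>i j. i \<noteq> j \<longrightarrow> S $ i $ j = 0" and X: "is_gauss (block_G Sg S) X"
  shows "distr X borel (swap_coords T) = X"
proof -
  have prob: "prob_space X" and sets: "sets X = sets borel"
    using X by (auto simp: is_gauss_def)
  have meas: "swap_coords T \<in> X \<rightarrow>\<^sub>M borel"
    by (simp add: measurable_cong_sets[OF sets refl])
  show ?thesis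
  proof (rule cramer_wold[OF prob_space.prob_space_distr[OF prob meas] prob _ sets])
    fix t :: "real^('a + 'a)"
    have "distr (distr X borel (swap_coords T)) borel (\<lambda>x. t \<bullet> x) = distr X borel (\<lambda>x. swap_coords T t \<bullet> x)"
      by (subst distr_distr) (simp_all add: meas o_def inner_swap_coords)
    also have "\<dots> = distr X borel (\<lambda>x. t \<bullet> x)"
      using X by (simp add: is_gauss_def quadratic_form_block_G_swap_coords[OF S])
    finally show "distr (distr X borel (swap_coords T)) borel (\<lambda>x. t \<bullet> x) = distr X borel (\<lambda>x. t \<bullet> x)" .
  qed simp
qed

lemma borel_measurable_Fj [measurable]: "Fj P j \<in> borel_measurable borel"
proof (cases "ty P j")
  case Disc
  have "Fj P j = (\<lambda>x. \<Sum>k\<in>{1..Kn P j}. if thr P j k < x then 1 else 0)"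
    using Disc by (simp add: fun_eq_iff Fj_def sum.If_cases Int_def conj_commute)
  then show ?thesis
    by simp
qed (simp add: Fj_def[abs_def])

lemma borel_measurable_Fmap [measurable]: "Fmap P \<in> borel \<rightarrow>\<^sub>M borel"
  unfolding Fmap_def by (rule borel_measurable_vec_lambda) simp

lemma borel_measurable_mask [measurable]: "mask a \<in> borel \<rightarrow>\<^sub>M borel"
  unfolding mask_def by (rule borel_measurable_vec_lambda) simp

lemma borel_measurable_linpred [measurable]: "linpred P R \<in> borel_measurable borel"
proof -
  have "linpred P R = (\<lambda>z. b0 R + (\<Sum>j\<in>UNIV. if ty P j = Cont then bet R j 1 * z $ j
      else (\<Sum>k\<in>{1..Kn P j}. bet R j k * (if z $ j \<ge> real k then 1 else 0))))"
    by (auto simp: fun_eq_iff linpred_def intro!: sum.cong split: vtype.split)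
  then show ?thesis
    by simp
qed

definition left_block :: "real^('p::finite + 'p) \<Rightarrow> real^'p" where
  "left_block v = (\<chi> i. v $ Inl i)"

definition right_block :: "real^('p::finite + 'p) \<Rightarrow> real^'p" where
  "right_block v = (\<chi> i. v $ Inr i)"

lemma left_block_join2 [simp]: "left_block (join2 x y) = x"
  by (simp add: left_block_def join2_def vec_eq_iff)

lemma right_block_join2 [simp]: "right_block (join2 x y) = y"
  by (simp add: right_block_def join2_def vec_eq_iff)

lemma left_block_measurable [measurable]: "left_block \<in> borel \<rightarrow>\<^sub>M borel"
  unfolding left_block_def by (rule borel_measurable_vec_lambda) simp

lemma right_block_measurable [measurable]: "right_block \<in> borel \<rightarrow>\<^sub>M borel"
  unfolding right_block_def by (rule borel_measurable_vec_lambda) simp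

lemma fst_vec_nth_measurable [measurable]:
  "(\<lambda>p. fst p $ i) \<in> borel_measurable (borel \<Otimes>\<^sub>M borel :: ((real^'n::finite) \<times> (real^'n)) measure)"
  by (rule measurable_compose[OF measurable_fst]) simp

lemma snd_vec_nth_measurable [measurable]:
  "(\<lambda>p. snd p $ i) \<in> borel_measurable (borel \<Otimes>\<^sub>M borel :: ((real^'n::finite) \<times> (real^'n)) measure)"
  by (rule measurable_compose[OF measurable_snd]) simp

lemma join2_measurable [measurable]:
  "(\<lambda>(x, y). join2 x y) \<in> borel \<Otimes>\<^sub>M borel \<rightarrow>\<^sub>M (borel :: (real^('p::finite + 'p)) measure)"
  unfolding join2_def case_prod_beta
proof (rule borel_measurable_vec_lambda)
  fix a :: "'p + 'p"
  show "(\<lambda>p. case a of Inl i \<Rightarrow> fst p $ i | Inr i \<Rightarrow> snd p $ i)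
      \<in> borel_measurable (borel \<Otimes>\<^sub>M borel :: ((real^'p) \<times> (real^'p)) measure)"
    by (cases a) simp_all
qed

lemma swapS_measurable [measurable]:
  "swapS T \<in> borel \<Otimes>\<^sub>M borel \<rightarrow>\<^sub>M (borel \<Otimes>\<^sub>M borel :: ((real^'p::finite) \<times> (real^'p)) measure)"
  unfolding swapS_def by (intro measurable_Pair borel_measurable_vec_lambda) (simp_all split: if_split)

lemma swapS_Fmap_blocks:
  "swapS T (Fmap P (left_block v), Fmap P (right_block v))
     = (Fmap P (left_block (swap_coords T v)), Fmap P (right_block (swap_coords T v)))"
  by (simp add: swapS_def Fmap_def left_block_def right_block_def swap_coords_def swap_index_def vec_eq_iff)

lemma prob_space_prob_kernel: "K \<in> M \<rightarrow>\<^sub>M prob_algebra N \<Longrightarrow> x \<in> space M \<Longrightarrow> prob_space (K x)"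
  using measurable_space[of K M "prob_algebra N" x] by (simp add: space_prob_algebra)

lemma sets_prob_kernel: "K \<in> M \<rightarrow>\<^sub>M prob_algebra N \<Longrightarrow> x \<in> space M \<Longrightarrow> sets (K x) = sets N"
  using measurable_space[of K M "prob_algebra N" x] by (simp add: space_prob_algebra)

lemma emeasure_distr_eq_nn_integral:
  "f \<in> M \<rightarrow>\<^sub>M N \<Longrightarrow> X \<in> sets N \<Longrightarrow> emeasure (distr M N f) X = (\<integral>\<^sup>+ x. indicator X (f x) \<partial>M)"
  using nn_integral_distr[of f M N "indicator X"] by simp

lemma nn_integral_bind_prob:
  assumes A: "A \<in> space (prob_algebra N)" and B: "B \<in> N \<rightarrow>\<^sub>M prob_algebra L"
    and f: "f \<in> borel_measurable L"
  shows "(\<integral>\<^sup>+ x. f x \<partial>(A \<bind> B)) = (\<integral>\<^sup>+ x. \<integral>\<^sup>+ y. f y \<partial>B x \<partial>A)"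
proof (rule nn_integral_bind[OF f])
  have "sets A = sets N"
    using A by (simp add: space_prob_algebra)
  then show "B \<in> A \<rightarrow>\<^sub>M subprob_algebra L"
    using measurable_prob_algebraD[OF B] measurable_cong_sets by blast
qed

lemma nn_integral_bind_prob_kernel:
  assumes "K \<in> M \<rightarrow>\<^sub>M prob_algebra N" "x \<in> space M" "B \<in> N \<rightarrow>\<^sub>M prob_algebra L"
    and "f \<in> borel_measurable L"
  shows "(\<integral>\<^sup>+ y. f y \<partial>(K x \<bind> B)) = (\<integral>\<^sup>+ z. \<integral>\<^sup>+ y. f y \<partial>B z \<partial>K x)"
  by (rule nn_integral_bind_prob[OF measurable_space[OF assms(1,2)] assms(3,4)])

lemma nn_integral_bind_return_prob_kernel:
  assumes "K \<in> M \<rightarrow>\<^sub>M prob_algebra N" "x \<in> space M" "g \<in> N \<rightarrow>\<^sub>M L"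
    and "f \<in> borel_measurable L"
  shows "(\<integral>\<^sup>+ y. f y \<partial>(K x \<bind> (\<lambda>z. return L (g z)))) = (\<integral>\<^sup>+ z. f (g z) \<partial>K x)"
proof -
  have "(\<integral>\<^sup>+ y. f y \<partial>(K x \<bind> (\<lambda>z. return L (g z)))) = (\<integral>\<^sup>+ z. \<integral>\<^sup>+ y. f y \<partial>return L (g z) \<partial>K x)"
    using assms by (intro nn_integral_bind_prob_kernel) auto
  also have "\<dots> = (\<integral>\<^sup>+ z. f (g z) \<partial>K x)"
    using assms measurable_space[OF assms(3)] sets_prob_kernel[OF assms(1,2)]
    by (intro nn_integral_cong nn_integral_return) (auto dest: sets_eq_imp_space_eq)
  finally show ?thesis .
qed

lemma density_count_space_prob_kernel:
  fixes d :: "'a \<Rightarrow> 'b::countable \<Rightarrow> ennreal"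
  assumes d: "\<And>y. (\<lambda>x. d x y) \<in> borel_measurable M"
    and one: "\<And>x. x \<in> space M \<Longrightarrow> (\<integral>\<^sup>+ y. d x y \<partial>count_space UNIV) = 1"
  shows "(\<lambda>x. density (count_space UNIV) (d x)) \<in> M \<rightarrow>\<^sub>M prob_algebra (count_space UNIV)"
proof (rule measurable_prob_algebra_generated[where \<Omega>=UNIV and G="Pow UNIV"])
  show "sets (count_space UNIV) = sigma_sets (UNIV::'b set) (Pow UNIV)"
    using sigma_algebra.sigma_sets_eq[OF sigma_algebra_Pow[of "UNIV::'b set"]] by simp
  show "prob_space (density (count_space UNIV) (d x))" if "x \<in> space M" for x
    by (rule prob_spaceI) (simp add: emeasure_density one[OF that])
  have "(\<lambda>p. (\<lambda>y p. d (fst p) y) (snd p) p) \<in> borel_measurable (M \<Otimes>\<^sub>M count_space UNIV)"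
    by (rule measurable_compose_countable) (use d in simp_all)
  then have "case_prod d \<in> borel_measurable (M \<Otimes>\<^sub>M count_space UNIV)"
    by (simp add: case_prod_beta')
  then show "(\<lambda>x. emeasure (density (count_space UNIV) (d x)) A) \<in> borel_measurable M" for A
    by (simp add: emeasure_density sigma_finite_measure.borel_measurable_nn_integral[OF sigma_finite_measure_count_space])
qed (auto simp: Int_stable_def)

lemma nn_integral_prod_pmf_eq_1:
  fixes h :: "'q::finite \<Rightarrow> nat \<Rightarrow> real"
  assumes nonneg: "\<And>j n. 0 \<le> h j n" and sums: "\<And>j. h j sums 1"
  shows "(\<integral>\<^sup>+ y. ennreal (\<Prod>j\<in>UNIV. h j (y j)) \<partial>count_space UNIV) = 1"
proof -
  have "(\<integral>\<^sup>+ n. ennreal (h j n) \<partial>count_space UNIV) = 1" for j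
  proof -
    have "(\<integral>\<^sup>+ n. ennreal (h j n) \<partial>count_space UNIV) = (\<Sum>n. ennreal (h j n))"
      by (rule nn_integral_count_space_nat)
    also have "\<dots> = ennreal (\<Sum>n. h j n)"
      using sums[of j] nonneg by (intro suminf_ennreal2) (auto simp: sums_iff)
    finally show ?thesis
      using sums[of j] by (simp add: sums_iff)
  qed
  then have pmf_embed: "pmf (embed_pmf (h j)) n = h j n" for j n
    by (intro pmf_embed_pmf) (use nonneg in auto)
  have "pmf (Pi_pmf UNIV 0 (\<lambda>j. embed_pmf (h j))) y = (\<Prod>j\<in>UNIV. h j (y j))" for y :: "'q \<Rightarrow> nat"
    by (subst pmf_Pi') (auto simp: pmf_embed)
  then have "(\<integral>\<^sup>+ y. ennreal (\<Prod>j\<in>UNIV. h j (y j)) \<partial>count_space UNIV)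
      = (\<integral>\<^sup>+ y. pmf (Pi_pmf UNIV 0 (\<lambda>j. embed_pmf (h j))) y \<partial>count_space UNIV)"
    by simp
  also have "\<dots> = 1"
    by (simp add: nn_integral_pmf)
  finally show ?thesis .
qed

lemma Aker_prob_kernel:
  assumes "valid_missing P R q"
  shows "Aker q \<in> borel \<rightarrow>\<^sub>M prob_algebra AS"
  unfolding Aker_def
proof (rule density_count_space_prob_kernel)
  show "(\<lambda>x. ennreal (q x a)) \<in> borel_measurable borel" for a
    using assms by (simp add: valid_missing_def)
  show "(\<integral>\<^sup>+ a. ennreal (q x a) \<partial>count_space UNIV) = 1" for x
    using assms by (simp add: nn_integral_count_space_finite sum_ennreal valid_missing_def)
qed

lemma Ylaw_prob_kernel:
  assumes "valid_latreg R"
  shows "Ylaw P R \<in> borel \<rightarrow>\<^sub>M prob_algebra YS"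
  unfolding Ylaw_def
proof (rule density_count_space_prob_kernel)
  have [measurable]: "(\<lambda>t. hh R j t n) \<in> borel_measurable borel" for j n
    using assms by (simp add: valid_latreg_def)
  have nonneg: "0 \<le> hh R j t n" and sums: "(\<lambda>n. hh R j t n) sums 1" for j t n
    using assms by (simp_all add: valid_latreg_def)
  have sigma: "0 < sqrt (s2 R)"
    using assms by (simp add: valid_latreg_def)
  let ?f = "\<lambda>z y t. ennreal ((\<Prod>j\<in>UNIV. hh R j t (y j)) * normal_density (linpred P R z) (sqrt (s2 R)) t)"
  show "(\<lambda>z. \<integral>\<^sup>+ t. ?f z y t \<partial>lborel) \<in> borel_measurable borel" for y :: "'b \<Rightarrow> nat"
  proof (rule lborel.borel_measurable_nn_integral)
    show "(\<lambda>(z, t). ?f z y t) \<in> borel_measurable (borel \<Otimes>\<^sub>M lborel)"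
      unfolding normal_density_def by measurable
  qed
  fix z :: "real^'a"
  have "(\<integral>\<^sup>+ y. \<integral>\<^sup>+ t. ?f z y t \<partial>lborel \<partial>count_space UNIV) = (\<integral>\<^sup>+ t. \<integral>\<^sup>+ y. ?f z y t \<partial>count_space UNIV \<partial>lborel)"
    by (rule nn_integral_count_space_nn_integral[symmetric]) auto
  also have "\<dots> = (\<integral>\<^sup>+ t. ennreal (normal_density (linpred P R z) (sqrt (s2 R)) t) \<partial>lborel)"
  proof (rule nn_integral_cong)
    fix t
    have "(\<integral>\<^sup>+ y. ?f z y t \<partial>count_space UNIV)
        = (\<integral>\<^sup>+ y. ennreal (\<Prod>j\<in>UNIV. hh R j t (y j)) * ennreal (normal_density (linpred P R z) (sqrt (s2 R)) t) \<partial>count_space UNIV)"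
      by (intro nn_integral_cong) (simp add: ennreal_mult prod_nonneg nonneg)
    also have "\<dots> = (\<integral>\<^sup>+ y. ennreal (\<Prod>j\<in>UNIV. hh R j t (y j)) \<partial>count_space UNIV) * ennreal (normal_density (linpred P R z) (sqrt (s2 R)) t)"
      by (rule nn_integral_multc) simp
    finally show "(\<integral>\<^sup>+ y. ?f z y t \<partial>count_space UNIV) = ennreal (normal_density (linpred P R z) (sqrt (s2 R)) t)"
      using nn_integral_prod_pmf_eq_1[of "\<lambda>j n. hh R j t n"] nonneg sums by simp
  qed
  also have "\<dots> = 1"
    using integrable_normal_density[OF sigma] integral_normal_density[OF sigma]
    by (subst nn_integral_eq_integral) auto
  finally show "(\<integral>\<^sup>+ y. \<integral>\<^sup>+ t. ?f z y t \<partial>lborel \<partial>count_space UNIV) = 1" .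
qed

subsection \<open>The joint model\<close>

declare nn_integral_measurable_subprob_algebra2[measurable (raw)]

locale knockoff_setting =
  fixes P :: "'p::finite copula" and R :: "('p, 'q::finite) latreg"
    and q :: "real^'p \<Rightarrow> 'p set \<Rightarrow> real"
    and NZ :: "(real^'p) measure" and S :: "real^'p^'p"
    and K1 :: "'p set \<Rightarrow> (real^'p) \<times> ('q \<Rightarrow> nat) \<Rightarrow> (real^'p) measure"
    and K2 :: "real^'p \<Rightarrow> (real^'p) measure"
  assumes latreg: "valid_latreg R" and missing: "valid_missing P R q"
    and gauss_latent: "is_gauss (Sig P) NZ"
    and diagonal_S: "\<forall>i j. i \<noteq> j \<longrightarrow> S $ i $ j = 0"
    and cond_kernel_K1: "\<And>a. cond_kernel P R NZ a (K1 a)"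
    and prob_kernel_K2: "K2 \<in> ZS \<rightarrow>\<^sub>M prob_algebra ZS"
    and gauss_latent_pair: "is_gauss (block_G (Sig P) S) (bind NZ (\<lambda>w. distr (K2 w) borel (join2 w)))"
begin

lemma prob_space_NZ: "prob_space NZ" and sets_NZ [measurable_cong]: "sets NZ = sets borel"
  using gauss_latent by (auto simp: is_gauss_def)

lemma NZ_in_prob_algebra: "NZ \<in> space (prob_algebra borel)"
  using prob_space_NZ sets_NZ by (simp add: space_prob_algebra)

lemma Ylaw_measurable [measurable]: "Ylaw P R \<in> borel \<rightarrow>\<^sub>M prob_algebra YS"
  by (rule Ylaw_prob_kernel[OF latreg])

lemma sets_Ylaw [measurable_cong]: "sets (Ylaw P R z) = sets YS"
  by (simp add: sets_prob_kernel[OF Ylaw_measurable])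

lemma Aker_measurable [measurable]: "Aker q \<in> borel \<rightarrow>\<^sub>M prob_algebra AS"
  by (rule Aker_prob_kernel[OF missing])

lemma K1_measurable [measurable]: "K1 a \<in> ZS \<Otimes>\<^sub>M YS \<rightarrow>\<^sub>M prob_algebra ZS"
  using cond_kernel_K1 by (simp add: cond_kernel_def)

lemma K2_measurable [measurable]: "K2 \<in> ZS \<rightarrow>\<^sub>M prob_algebra ZS"
  by (rule prob_kernel_K2)

lemma subprob_kernels_measurable [measurable]:
  "Ylaw P R \<in> borel \<rightarrow>\<^sub>M subprob_algebra YS" "Aker q \<in> borel \<rightarrow>\<^sub>M subprob_algebra AS"
  "K1 a \<in> ZS \<Otimes>\<^sub>M YS \<rightarrow>\<^sub>M subprob_algebra ZS" "K2 \<in> ZS \<rightarrow>\<^sub>M subprob_algebra ZS"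
  by (intro measurable_prob_algebraD; measurable)+

lemma K1_measurable_dependent [measurable (raw)]:
  assumes "f \<in> L \<rightarrow>\<^sub>M AS" "g \<in> L \<rightarrow>\<^sub>M ZS \<Otimes>\<^sub>M YS"
  shows "(\<lambda>x. K1 (f x) (g x)) \<in> L \<rightarrow>\<^sub>M prob_algebra ZS"
proof -
  have "(\<lambda>(a, x). K1 a x) \<in> AS \<Otimes>\<^sub>M (ZS \<Otimes>\<^sub>M YS) \<rightarrow>\<^sub>M prob_algebra ZS"
    by (rule measurable_pair_measure_countable1) simp_all
  from measurable_compose[OF measurable_Pair[OF assms] this] show ?thesis
    by simp
qed

lemma mask_measurable_dependent [measurable (raw)]:
  assumes "f \<in> L \<rightarrow>\<^sub>M (AS :: 'p set measure)" "g \<in> L \<rightarrow>\<^sub>M borel"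
  shows "(\<lambda>x. mask (f x) (g x)) \<in> L \<rightarrow>\<^sub>M borel"
proof -
  have "(\<lambda>(a, z). mask a z) \<in> (AS :: 'p set measure) \<Otimes>\<^sub>M borel \<rightarrow>\<^sub>M borel"
    by (rule measurable_pair_measure_countable1) simp_all
  from measurable_compose[OF measurable_Pair[OF assms] this] show ?thesis
    by simp
qed

lemma q_measurable_dependent [measurable (raw)]:
  assumes "f \<in> L \<rightarrow>\<^sub>M (AS :: 'p set measure)" "g \<in> L \<rightarrow>\<^sub>M borel"
  shows "(\<lambda>x. q (g x) (f x)) \<in> borel_measurable L"
proof -
  have "(\<lambda>z. q z a) \<in> borel_measurable borel" for a
    using missing by (simp add: valid_missing_def)
  then have "(\<lambda>(a, z). q z a) \<in> (AS :: 'p set measure) \<Otimes>\<^sub>M borel \<rightarrow>\<^sub>M borel"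
    by (intro measurable_pair_measure_countable1) simp_all
  from measurable_compose[OF measurable_Pair[OF assms] this] show ?thesis
    by simp
qed

lemma modelZY_in_prob_algebra: "modelZY P R NZ \<in> space (prob_algebra (ZS \<Otimes>\<^sub>M YS))"
  unfolding modelZY_def
  by (rule measurable_space[OF measurable_bind_prob_space[OF measurable_const[OF NZ_in_prob_algebra]],
        of _ _ undefined "count_space UNIV"]) measurable

lemma nn_integral_modelZY:
  assumes [measurable]: "f \<in> borel_measurable (ZS \<Otimes>\<^sub>M YS)"
  shows "(\<integral>\<^sup>+ x. f x \<partial>modelZY P R NZ) = (\<integral>\<^sup>+ zs. \<integral>\<^sup>+ y. f (zs, y) \<partial>Ylaw P R (Fmap P zs) \<partial>NZ)"
proof -
  have "(\<integral>\<^sup>+ x. f x \<partial>modelZY P R NZ)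
      = (\<integral>\<^sup>+ zs. \<integral>\<^sup>+ x. f x \<partial>(Ylaw P R (Fmap P zs) \<bind> (\<lambda>y. return (ZS \<Otimes>\<^sub>M YS) (zs, y))) \<partial>NZ)"
    unfolding modelZY_def by (rule nn_integral_bind_prob[OF NZ_in_prob_algebra]) measurable
  also have "\<dots> = (\<integral>\<^sup>+ zs. \<integral>\<^sup>+ y. f (zs, y) \<partial>Ylaw P R (Fmap P zs) \<partial>NZ)"
    by (rule nn_integral_cong, rule nn_integral_bind_return_prob_kernel[OF Ylaw_measurable]) (simp_all add: space_pair_measure)
  finally show ?thesis .
qed

lemma nn_integral_cond_kernel:
  assumes [measurable]: "h \<in> borel_measurable (ZS \<Otimes>\<^sub>M YS \<Otimes>\<^sub>M ZS)"
  shows "(\<integral>\<^sup>+ zs. \<integral>\<^sup>+ y. h (mask a (Fmap P zs), y, zs) \<partial>Ylaw P R (Fmap P zs) \<partial>NZ)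
       = (\<integral>\<^sup>+ zs. \<integral>\<^sup>+ y. \<integral>\<^sup>+ w. h (mask a (Fmap P zs), y, w) \<partial>K1 a (mask a (Fmap P zs), y)
            \<partial>Ylaw P R (Fmap P zs) \<partial>NZ)"
proof -
  let ?M = "modelZY P R NZ"
  let ?obs = "\<lambda>(zs, y). (mask a (Fmap P zs), y)"
  have sets_M [measurable_cong]: "sets ?M = sets (ZS \<Otimes>\<^sub>M YS)"
    using modelZY_in_prob_algebra by (simp add: space_prob_algebra)
  have obs_law: "distr ?M (ZS \<Otimes>\<^sub>M YS) ?obs \<in> space (prob_algebra (ZS \<Otimes>\<^sub>M YS))"
    using modelZY_in_prob_algebra by (auto simp: space_prob_algebra intro!: prob_space.prob_space_distr)
  have "(\<integral>\<^sup>+ zs. \<integral>\<^sup>+ y. h (mask a (Fmap P zs), y, zs) \<partial>Ylaw P R (Fmap P zs) \<partial>NZ)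
      = (\<integral>\<^sup>+ x. h x \<partial>distr ?M (ZS \<Otimes>\<^sub>M YS \<Otimes>\<^sub>M ZS) (\<lambda>(zs, y). (mask a (Fmap P zs), y, zs)))"
    by (subst nn_integral_distr) (simp_all add: nn_integral_modelZY)
  also have "\<dots> = (\<integral>\<^sup>+ x. h x \<partial>(distr ?M (ZS \<Otimes>\<^sub>M YS) ?obs \<bind>
      (\<lambda>(zo, y). K1 a (zo, y) \<bind> (\<lambda>w. return (ZS \<Otimes>\<^sub>M YS \<Otimes>\<^sub>M ZS) (zo, y, w)))))"
    using cond_kernel_K1[of a] by (simp add: cond_kernel_def)
  also have "\<dots> = (\<integral>\<^sup>+ x. \<integral>\<^sup>+ w. h (fst x, snd x, w) \<partial>K1 a x \<partial>distr ?M (ZS \<Otimes>\<^sub>M YS) ?obs)"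
    by (subst nn_integral_bind_prob[OF obs_law], measurable, rule nn_integral_cong)
       (auto simp: space_pair_measure intro!: nn_integral_bind_return_prob_kernel[OF K1_measurable])
  also have "\<dots> = (\<integral>\<^sup>+ zs. \<integral>\<^sup>+ y. \<integral>\<^sup>+ w. h (mask a (Fmap P zs), y, w) \<partial>K1 a (mask a (Fmap P zs), y)
            \<partial>Ylaw P R (Fmap P zs) \<partial>NZ)"
    by (subst nn_integral_distr) (simp_all add: nn_integral_modelZY)
  finally show ?thesis .
qed

lemma nn_integral_cond_kernel_UNIV:
  assumes [measurable]: "(\<lambda>(z, w). g z w) \<in> borel_measurable (ZS \<Otimes>\<^sub>M ZS)"
  shows "(\<integral>\<^sup>+ zs. g (Fmap P zs) zs \<partial>NZ)
       = (\<integral>\<^sup>+ zs. \<integral>\<^sup>+ y. \<integral>\<^sup>+ w. g (Fmap P zs) w \<partial>K1 UNIV (Fmap P zs, y) \<partial>Ylaw P R (Fmap P zs) \<partial>NZ)"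
proof -
  have mask_UNIV: "mask UNIV z = z" for z :: "real^'p"
    by (simp add: mask_def vec_eq_iff)
  have "(\<integral>\<^sup>+ zs. g (Fmap P zs) zs \<partial>NZ) = (\<integral>\<^sup>+ zs. \<integral>\<^sup>+ y. g (Fmap P zs) zs \<partial>Ylaw P R (Fmap P zs) \<partial>NZ)"
    using prob_space.emeasure_space_1[OF prob_space_prob_kernel[OF Ylaw_measurable]] by simp
  also have "\<dots> = (\<integral>\<^sup>+ zs. \<integral>\<^sup>+ y. \<integral>\<^sup>+ w. g (Fmap P zs) w \<partial>K1 UNIV (Fmap P zs, y) \<partial>Ylaw P R (Fmap P zs) \<partial>NZ)"
    using nn_integral_cond_kernel[of "\<lambda>(zo, y, w). g zo w" UNIV] by (simp add: mask_UNIV)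
  finally show ?thesis .
qed

text \<open>The conditional law of the complete knockoff \<open>F(Z\<^sup>~\<^sup>*)\<close> given \<open>Z = z\<close>: draw \<open>Y\<close>, then \<open>Z\<^sup>*\<close>
  given \<open>(Z, Y)\<close> (Step 1 with every predictor observed), then \<open>Z\<^sup>~\<^sup>*\<close> (Step 2).\<close>

definition knockoff_kernel :: "real^'p \<Rightarrow> (real^'p) measure" where
  "knockoff_kernel z = Ylaw P R z \<bind> (\<lambda>y. K1 UNIV (z, y) \<bind> (\<lambda>w. distr (K2 w) ZS (Fmap P)))"

lemma knockoff_kernel_measurable [measurable]: "knockoff_kernel \<in> borel \<rightarrow>\<^sub>M prob_algebra borel"
  unfolding knockoff_kernel_def by measurable

lemma knockoff_kernel_measurable' [measurable]: "knockoff_kernel \<in> borel \<rightarrow>\<^sub>M subprob_algebra borel"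
  by (rule measurable_prob_algebraD[OF knockoff_kernel_measurable])

lemma nn_integral_knockoff_kernel:
  assumes [measurable]: "f \<in> borel_measurable ZS"
  shows "(\<integral>\<^sup>+ zt. f zt \<partial>knockoff_kernel z)
       = (\<integral>\<^sup>+ y. \<integral>\<^sup>+ w. \<integral>\<^sup>+ wt. f (Fmap P wt) \<partial>K2 w \<partial>K1 UNIV (z, y) \<partial>Ylaw P R z)"
proof -
  have distr_Fmap: "(\<integral>\<^sup>+ zt. f zt \<partial>distr (K2 w) ZS (Fmap P)) = (\<integral>\<^sup>+ wt. f (Fmap P wt) \<partial>K2 w)" for w
    by (rule nn_integral_distr) (simp_all add: measurable_cong_sets[OF sets_prob_kernel[OF K2_measurable] refl])
  show ?thesis
    unfolding knockoff_kernel_def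
    by (subst nn_integral_bind_prob_kernel[OF Ylaw_measurable], simp, measurable, rule nn_integral_cong)
       (subst nn_integral_bind_prob_kernel[OF K1_measurable, where L=borel], simp_all add: space_pair_measure distr_Fmap)
qed

abbreviation ZZYAS :: "((real^'p) \<times> (real^'p) \<times> ('q \<Rightarrow> nat) \<times> 'p set) measure" where
  "ZZYAS \<equiv> ZS \<Otimes>\<^sub>M ZS \<Otimes>\<^sub>M YS \<Otimes>\<^sub>M AS"

definition knockoff_joint :: "((real^'p) \<times> (real^'p) \<times> ('q \<Rightarrow> nat) \<times> 'p set) measure" where
  "knockoff_joint = distr NZ ZS (Fmap P) \<bind> (\<lambda>z. knockoff_kernel z \<bind> (\<lambda>zt. Ylaw P R z \<bind> (\<lambda>y.
      Aker q z \<bind> (\<lambda>a. return ZZYAS (z, zt, y, a)))))"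

lemma distr_Fmap_NZ_in_prob_algebra: "distr NZ ZS (Fmap P) \<in> space (prob_algebra ZS)"
  using prob_space_NZ by (simp add: space_prob_algebra prob_space.prob_space_distr)

lemma knockoff_joint_in_prob_algebra: "knockoff_joint \<in> space (prob_algebra ZZYAS)"
  unfolding knockoff_joint_def
  by (rule measurable_space[OF measurable_bind_prob_space[OF measurable_const[OF distr_Fmap_NZ_in_prob_algebra]],
        of _ _ undefined "count_space UNIV"]) measurable

lemma sets_knockoff_joint [measurable_cong]: "sets knockoff_joint = sets ZZYAS"
  using knockoff_joint_in_prob_algebra by (simp add: space_prob_algebra)

lemma nn_integral_knockoff_joint:
  assumes [measurable]: "f \<in> borel_measurable ZZYAS"
  shows "(\<integral>\<^sup>+ x. f x \<partial>knockoff_joint)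
       = (\<integral>\<^sup>+ zs. \<integral>\<^sup>+ wt. \<integral>\<^sup>+ y. \<integral>\<^sup>+ a. f (Fmap P zs, Fmap P wt, y, a)
            \<partial>Aker q (Fmap P zs) \<partial>Ylaw P R (Fmap P zs) \<partial>K2 zs \<partial>NZ)"
proof -
  define G where "G z zt = (\<integral>\<^sup>+ y. \<integral>\<^sup>+ a. f (z, zt, y, a) \<partial>Aker q z \<partial>Ylaw P R z)" for z zt
  have [measurable]: "(\<lambda>(z, zt). G z zt) \<in> borel_measurable (ZS \<Otimes>\<^sub>M ZS)"
    unfolding G_def by measurable
  have inner: "(\<integral>\<^sup>+ x. f x \<partial>(knockoff_kernel z \<bind> (\<lambda>zt. Ylaw P R z \<bind> (\<lambda>y. Aker q z \<bind> (\<lambda>a. return ZZYAS (z, zt, y, a))))))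
      = (\<integral>\<^sup>+ zt. G z zt \<partial>knockoff_kernel z)" for z
    unfolding G_def
    by (subst nn_integral_bind_prob_kernel[OF knockoff_kernel_measurable], simp, measurable, rule nn_integral_cong)
       (subst nn_integral_bind_prob_kernel[OF Ylaw_measurable], simp, measurable, rule nn_integral_cong,
        rule nn_integral_bind_return_prob_kernel[OF Aker_measurable], simp_all add: space_pair_measure)
  have "(\<integral>\<^sup>+ x. f x \<partial>knockoff_joint) = (\<integral>\<^sup>+ z. \<integral>\<^sup>+ zt. G z zt \<partial>knockoff_kernel z \<partial>distr NZ ZS (Fmap P))"
    unfolding knockoff_joint_def
    by (subst nn_integral_bind_prob[OF distr_Fmap_NZ_in_prob_algebra]) (measurable, simp add: inner)
  also have "\<dots> = (\<integral>\<^sup>+ zs. \<integral>\<^sup>+ zt. G (Fmap P zs) zt \<partial>knockoff_kernel (Fmap P zs) \<partial>NZ)"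
    by (rule nn_integral_distr) measurable
  also have "\<dots> = (\<integral>\<^sup>+ zs. \<integral>\<^sup>+ y. \<integral>\<^sup>+ w. \<integral>\<^sup>+ wt. G (Fmap P zs) (Fmap P wt) \<partial>K2 w
      \<partial>K1 UNIV (Fmap P zs, y) \<partial>Ylaw P R (Fmap P zs) \<partial>NZ)"
    by (intro nn_integral_cong nn_integral_knockoff_kernel) measurable
  also have "\<dots> = (\<integral>\<^sup>+ zs. \<integral>\<^sup>+ wt. G (Fmap P zs) (Fmap P wt) \<partial>K2 zs \<partial>NZ)"
    by (rule nn_integral_cond_kernel_UNIV[where g="\<lambda>z w. \<integral>\<^sup>+ wt. G z (Fmap P wt) \<partial>K2 w", symmetric])
      measurable
  finally show ?thesis
    by (simp add: G_def)
qed

abbreviation latent_pair :: "(real^('p + 'p)) measure" where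
  "latent_pair \<equiv> NZ \<bind> (\<lambda>w. distr (K2 w) borel (join2 w))"

lemma sets_latent_pair [measurable_cong]: "sets latent_pair = sets borel"
  using gauss_latent_pair by (simp add: is_gauss_def)

lemma distr_knockoff_joint_pair:
  "distr knockoff_joint (ZS \<Otimes>\<^sub>M ZS) (\<lambda>(z, zt, y, a). (z, zt))
     = distr latent_pair (ZS \<Otimes>\<^sub>M ZS) (\<lambda>v. (Fmap P (left_block v), Fmap P (right_block v)))"
proof (rule measure_eqI)
  fix X assume "X \<in> sets (distr knockoff_joint (ZS \<Otimes>\<^sub>M ZS) (\<lambda>(z, zt, y, a). (z, zt)))"
  then have [measurable]: "X \<in> sets (ZS \<Otimes>\<^sub>M ZS)"
    by simp
  have join2_measurable_K2: "join2 zs \<in> K2 zs \<rightarrow>\<^sub>M borel" for zs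
    by (simp add: measurable_cong_sets[OF sets_prob_kernel[OF K2_measurable] refl])
  have "emeasure (distr knockoff_joint (ZS \<Otimes>\<^sub>M ZS) (\<lambda>(z, zt, y, a). (z, zt))) X
      = (\<integral>\<^sup>+ zs. \<integral>\<^sup>+ wt. \<integral>\<^sup>+ y. \<integral>\<^sup>+ a. indicator X (Fmap P zs, Fmap P wt)
           \<partial>Aker q (Fmap P zs) \<partial>Ylaw P R (Fmap P zs) \<partial>K2 zs \<partial>NZ)"
  proof -
    have "emeasure (distr knockoff_joint (ZS \<Otimes>\<^sub>M ZS) (\<lambda>(z, zt, y, a). (z, zt))) X
        = (\<integral>\<^sup>+ x. indicator X ((\<lambda>(z, zt, y, a). (z, zt)) x) \<partial>knockoff_joint)"
      by (rule emeasure_distr_eq_nn_integral) simp_all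
    then show ?thesis
      by (subst (asm) nn_integral_knockoff_joint) simp_all
  qed
  also have "\<dots> = (\<integral>\<^sup>+ zs. \<integral>\<^sup>+ wt. indicator X (Fmap P zs, Fmap P wt) \<partial>K2 zs \<partial>NZ)"
    by (simp add: prob_space.emeasure_space_1 prob_space_prob_kernel[OF Aker_measurable]
        prob_space_prob_kernel[OF Ylaw_measurable])
  also have "\<dots> = (\<integral>\<^sup>+ zs. \<integral>\<^sup>+ v. indicator X (Fmap P (left_block v), Fmap P (right_block v))
      \<partial>distr (K2 zs) borel (join2 zs) \<partial>NZ)"
    by (intro nn_integral_cong, subst nn_integral_distr[OF join2_measurable_K2]) simp_all
  also have "\<dots> = (\<integral>\<^sup>+ v. indicator X (Fmap P (left_block v), Fmap P (right_block v)) \<partial>latent_pair)"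
    by (rule nn_integral_bind_prob[OF NZ_in_prob_algebra, symmetric]) measurable
  also have "\<dots> = emeasure (distr latent_pair (ZS \<Otimes>\<^sub>M ZS) (\<lambda>v. (Fmap P (left_block v), Fmap P (right_block v)))) X"
    by (rule emeasure_distr_eq_nn_integral[symmetric]) simp_all
  finally show "emeasure (distr knockoff_joint (ZS \<Otimes>\<^sub>M ZS) (\<lambda>(z, zt, y, a). (z, zt))) X
      = emeasure (distr latent_pair (ZS \<Otimes>\<^sub>M ZS) (\<lambda>v. (Fmap P (left_block v), Fmap P (right_block v)))) X" .
qed simp

lemma knockoff_joint_pair_swap_invariant:
  "distr (distr knockoff_joint (ZS \<Otimes>\<^sub>M ZS) (\<lambda>(z, zt, y, a). (z, zt))) (ZS \<Otimes>\<^sub>M ZS) (swapS T)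
     = distr knockoff_joint (ZS \<Otimes>\<^sub>M ZS) (\<lambda>(z, zt, y, a). (z, zt))"
proof -
  let ?F = "\<lambda>v. (Fmap P (left_block v), Fmap P (right_block v))"
  have "distr (distr latent_pair (ZS \<Otimes>\<^sub>M ZS) ?F) (ZS \<Otimes>\<^sub>M ZS) (swapS T)
      = distr latent_pair (ZS \<Otimes>\<^sub>M ZS) (?F \<circ> swap_coords T)"
    by (subst distr_distr) (simp_all add: comp_def swapS_Fmap_blocks)
  also have "\<dots> = distr (distr latent_pair borel (swap_coords T)) (ZS \<Otimes>\<^sub>M ZS) ?F"
    by (subst distr_distr) simp_all
  also have "distr latent_pair borel (swap_coords T) = latent_pair"
    by (rule is_gauss_swap_coords_invariant[OF diagonal_S gauss_latent_pair])
  finally show ?thesis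
    by (simp add: distr_knockoff_joint_pair)
qed

lemma q_mask_eq: "q z a = q (mask a z) a"
proof -
  have "\<forall>k\<in>a \<inter> nonnull P R. z $ k = mask a z $ k"
    by (simp add: mask_def)
  then show ?thesis
    using missing unfolding valid_missing_def by blast
qed

lemma nn_integral_Aker:
  "F \<in> borel_measurable AS \<Longrightarrow> (\<integral>\<^sup>+ a. F a \<partial>Aker q z) = (\<Sum>a\<in>UNIV. ennreal (q z a) * F a)"
  unfolding Aker_def by (subst nn_integral_density) (simp_all add: nn_integral_count_space_finite)

abbreviation ZAYS :: "((real^'p) \<times> 'p set \<times> ('q \<Rightarrow> nat)) measure" where
  "ZAYS \<equiv> ZS \<Otimes>\<^sub>M AS \<Otimes>\<^sub>M YS"

abbreviation ZAYZS :: "((real^'p) \<times> 'p set \<times> ('q \<Rightarrow> nat) \<times> (real^'p)) measure" where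
  "ZAYZS \<equiv> ZS \<Otimes>\<^sub>M AS \<Otimes>\<^sub>M YS \<Otimes>\<^sub>M ZS"

lemma truth_in_prob_algebra: "truth P R q NZ \<in> space (prob_algebra ZAYS)"
  unfolding truth_def
  by (rule measurable_space[OF measurable_bind_prob_space[OF measurable_const[OF NZ_in_prob_algebra]],
        of _ _ undefined "count_space UNIV"]) measurable

lemma nn_integral_truth:
  assumes [measurable]: "f \<in> borel_measurable ZAYS"
  shows "(\<integral>\<^sup>+ x. f x \<partial>truth P R q NZ)
       = (\<integral>\<^sup>+ zs. \<integral>\<^sup>+ a. \<integral>\<^sup>+ y. f (zs, a, y) \<partial>Ylaw P R (Fmap P zs) \<partial>Aker q (Fmap P zs) \<partial>NZ)"
  unfolding truth_def
  by (subst nn_integral_bind_prob[OF NZ_in_prob_algebra], measurable, rule nn_integral_cong)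
     (subst nn_integral_bind_prob_kernel[OF Aker_measurable], simp, measurable, rule nn_integral_cong,
      rule nn_integral_bind_return_prob_kernel[OF Ylaw_measurable], simp_all add: space_pair_measure)

lemma nn_integral_out_law:
  assumes [measurable]: "f \<in> borel_measurable ZAYZS"
  shows "(\<integral>\<^sup>+ x. f x \<partial>out_law P R q NZ K1 K2)
       = (\<integral>\<^sup>+ zs. \<integral>\<^sup>+ a. \<integral>\<^sup>+ y. \<integral>\<^sup>+ w. \<integral>\<^sup>+ wt. f (mask a (Fmap P zs), a, y, mask a (Fmap P wt))
            \<partial>K2 w \<partial>K1 a (mask a (Fmap P zs), y) \<partial>Ylaw P R (Fmap P zs) \<partial>Aker q (Fmap P zs) \<partial>NZ)"
proof -
  have "(\<integral>\<^sup>+ x. f x \<partial>out_law P R q NZ K1 K2) = (\<integral>\<^sup>+ x. (\<lambda>(zs, a, y). \<integral>\<^sup>+ w. \<integral>\<^sup>+ wt.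
      f (mask a (Fmap P zs), a, y, mask a (Fmap P wt)) \<partial>K2 w \<partial>K1 a (mask a (Fmap P zs), y)) x \<partial>truth P R q NZ)"
    unfolding out_law_def
    by (subst nn_integral_bind_prob[OF truth_in_prob_algebra], measurable, rule nn_integral_cong, clarsimp)
       (subst nn_integral_bind_prob_kernel[OF K1_measurable], simp add: space_pair_measure, measurable,
        rule nn_integral_cong, rule nn_integral_bind_return_prob_kernel[OF K2_measurable],
        simp_all add: space_pair_measure)
  then show ?thesis
    by (simp add: nn_integral_truth)
qed

text \<open>The probability of the missingness pattern \<open>a\<close> times the mean of \<open>f\<close> over the knockoff
  generated from the latent vector \<open>w\<close>; by SMAR that probability can be computed from the observed
  predictors \<open>zo\<close> alone.\<close>

definition obs_weight ::
    "((real^'p) \<times> 'p set \<times> ('q \<Rightarrow> nat) \<times> (real^'p) \<Rightarrow> ennreal) \<Rightarrow> 'p set \<Rightarrow> real^'p \<Rightarrow> ('q \<Rightarrow> nat) \<Rightarrow> real^'p \<Rightarrow> ennreal" where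
  "obs_weight f a zo y w = ennreal (q zo a) * (\<integral>\<^sup>+ wt. f (zo, a, y, mask a (Fmap P wt)) \<partial>K2 w)"

lemma obs_weight_measurable [measurable (raw)]:
  assumes [measurable]: "f \<in> borel_measurable ZAYZS"
    and "g1 \<in> M \<rightarrow>\<^sub>M ZS" "g2 \<in> M \<rightarrow>\<^sub>M YS" "g3 \<in> M \<rightarrow>\<^sub>M ZS"
  shows "(\<lambda>x. obs_weight f a (g1 x) (g2 x) (g3 x)) \<in> borel_measurable M"
proof -
  have tuple: "(\<lambda>x. (g1 x, g2 x, g3 x)) \<in> M \<rightarrow>\<^sub>M ZS \<Otimes>\<^sub>M YS \<Otimes>\<^sub>M ZS"
    using assms(2-4) by measurable
  have "(\<lambda>(zo, y, w). obs_weight f a zo y w) \<in> borel_measurable (ZS \<Otimes>\<^sub>M YS \<Otimes>\<^sub>M ZS)"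
    unfolding obs_weight_def by measurable
  from measurable_compose[OF tuple this] show ?thesis
    by simp
qed

lemma nn_integral_knockoff_given_latent:
  assumes [measurable]: "f \<in> borel_measurable ZAYZS"
  shows "(\<integral>\<^sup>+ wt. \<integral>\<^sup>+ y. \<integral>\<^sup>+ a. f (mask a (Fmap P zs), a, y, mask a (Fmap P wt))
            \<partial>Aker q (Fmap P zs) \<partial>Ylaw P R (Fmap P zs) \<partial>K2 zs)
       = (\<integral>\<^sup>+ y. (\<Sum>a\<in>UNIV. obs_weight f a (mask a (Fmap P zs)) y zs) \<partial>Ylaw P R (Fmap P zs))"
proof -
  interpret pair_prob_space "K2 zs" "Ylaw P R (Fmap P zs)"
    by (simp add: pair_prob_space_def pair_sigma_finite_def prob_space_imp_sigma_finite
        prob_space_prob_kernel[OF K2_measurable] prob_space_prob_kernel[OF Ylaw_measurable])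
  have sets_K2 [measurable_cong]: "sets (K2 zs) = sets ZS"
    by (simp add: sets_prob_kernel[OF K2_measurable])
  let ?g = "\<lambda>a y wt. ennreal (q (Fmap P zs) a) * f (mask a (Fmap P zs), a, y, mask a (Fmap P wt))"
  have "(\<integral>\<^sup>+ wt. \<integral>\<^sup>+ y. \<integral>\<^sup>+ a. f (mask a (Fmap P zs), a, y, mask a (Fmap P wt))
            \<partial>Aker q (Fmap P zs) \<partial>Ylaw P R (Fmap P zs) \<partial>K2 zs)
      = (\<integral>\<^sup>+ wt. \<integral>\<^sup>+ y. (\<Sum>a\<in>UNIV. ?g a y wt) \<partial>Ylaw P R (Fmap P zs) \<partial>K2 zs)"
    by (intro nn_integral_cong nn_integral_Aker) (simp add: measurable_count_space_eq1)
  also have "\<dots> = (\<integral>\<^sup>+ y. \<integral>\<^sup>+ wt. (\<Sum>a\<in>UNIV. ?g a y wt) \<partial>K2 zs \<partial>Ylaw P R (Fmap P zs))"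
  proof (rule Fubini'[symmetric])
    have "sets (K2 zs \<Otimes>\<^sub>M Ylaw P R (Fmap P zs)) = sets (ZS \<Otimes>\<^sub>M YS)"
      by (intro sets_pair_measure_cong sets_K2 sets_Ylaw)
    then have eq: "borel_measurable (K2 zs \<Otimes>\<^sub>M Ylaw P R (Fmap P zs)) = borel_measurable (ZS \<Otimes>\<^sub>M YS)"
      by (rule measurable_cong_sets) simp
    show "(\<lambda>(wt, y). \<Sum>a\<in>UNIV. ?g a y wt) \<in> borel_measurable (K2 zs \<Otimes>\<^sub>M Ylaw P R (Fmap P zs))"
      unfolding eq by measurable
  qed
  also have "\<dots> = (\<integral>\<^sup>+ y. (\<Sum>a\<in>UNIV. \<integral>\<^sup>+ wt. ?g a y wt \<partial>K2 zs) \<partial>Ylaw P R (Fmap P zs))"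
    by (intro nn_integral_cong nn_integral_sum) measurable
  also have "\<dots> = (\<integral>\<^sup>+ y. (\<Sum>a\<in>UNIV. obs_weight f a (mask a (Fmap P zs)) y zs) \<partial>Ylaw P R (Fmap P zs))"
    unfolding obs_weight_def q_mask_eq[of "Fmap P zs"]
    by (intro nn_integral_cong sum.cong refl nn_integral_cmult) measurable
  finally show ?thesis .
qed

lemma nn_integral_distr_knockoff_joint_mask:
  assumes [measurable]: "f \<in> borel_measurable ZAYZS"
  shows "(\<integral>\<^sup>+ x. f x \<partial>distr knockoff_joint ZAYZS (\<lambda>(z, zt, y, a). (mask a z, a, y, mask a zt)))
       = (\<Sum>a\<in>UNIV. \<integral>\<^sup>+ zs. \<integral>\<^sup>+ y. obs_weight f a (mask a (Fmap P zs)) y zs \<partial>Ylaw P R (Fmap P zs) \<partial>NZ)"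
proof -
  have "(\<integral>\<^sup>+ x. f x \<partial>distr knockoff_joint ZAYZS (\<lambda>(z, zt, y, a). (mask a z, a, y, mask a zt)))
      = (\<integral>\<^sup>+ x. f ((\<lambda>(z, zt, y, a). (mask a z, a, y, mask a zt)) x) \<partial>knockoff_joint)"
    by (rule nn_integral_distr) measurable
  also have "\<dots> = (\<integral>\<^sup>+ zs. \<integral>\<^sup>+ y. (\<Sum>a\<in>UNIV. obs_weight f a (mask a (Fmap P zs)) y zs)
      \<partial>Ylaw P R (Fmap P zs) \<partial>NZ)"
    by (subst nn_integral_knockoff_joint) (simp_all add: nn_integral_knockoff_given_latent)
  also have "\<dots> = (\<Sum>a\<in>UNIV. \<integral>\<^sup>+ zs. \<integral>\<^sup>+ y. obs_weight f a (mask a (Fmap P zs)) y zs \<partial>Ylaw P R (Fmap P zs) \<partial>NZ)"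
    by (subst nn_integral_sum[symmetric], measurable, rule nn_integral_cong, rule nn_integral_sum) measurable
  finally show ?thesis .
qed

lemma q_mult_nn_integral_eq_obs_weight:
  assumes [measurable]: "f \<in> borel_measurable ZAYZS"
  shows "ennreal (q (Fmap P zs) a) * (\<integral>\<^sup>+ y. \<integral>\<^sup>+ w. \<integral>\<^sup>+ wt. f (mask a (Fmap P zs), a, y, mask a (Fmap P wt))
            \<partial>K2 w \<partial>K1 a (mask a (Fmap P zs), y) \<partial>Ylaw P R (Fmap P zs))
       = (\<integral>\<^sup>+ y. \<integral>\<^sup>+ w. obs_weight f a (mask a (Fmap P zs)) y w \<partial>K1 a (mask a (Fmap P zs), y) \<partial>Ylaw P R (Fmap P zs))"
proof -
  have "ennreal (q (Fmap P zs) a) * (\<integral>\<^sup>+ y. \<integral>\<^sup>+ w. \<integral>\<^sup>+ wt. f (mask a (Fmap P zs), a, y, mask a (Fmap P wt))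
            \<partial>K2 w \<partial>K1 a (mask a (Fmap P zs), y) \<partial>Ylaw P R (Fmap P zs))
      = (\<integral>\<^sup>+ y. ennreal (q (mask a (Fmap P zs)) a) * (\<integral>\<^sup>+ w. \<integral>\<^sup>+ wt.
          f (mask a (Fmap P zs), a, y, mask a (Fmap P wt)) \<partial>K2 w \<partial>K1 a (mask a (Fmap P zs), y)) \<partial>Ylaw P R (Fmap P zs))"
    unfolding q_mask_eq[of "Fmap P zs"] by (rule nn_integral_cmult[symmetric]) measurable
  also have "\<dots> = (\<integral>\<^sup>+ y. \<integral>\<^sup>+ w. obs_weight f a (mask a (Fmap P zs)) y w
      \<partial>K1 a (mask a (Fmap P zs), y) \<partial>Ylaw P R (Fmap P zs))"
  proof (rule nn_integral_cong)
    fix y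
    have "sets (K1 a (mask a (Fmap P zs), y)) = sets ZS"
      by (simp add: sets_prob_kernel[OF K1_measurable] space_pair_measure)
    then have "(\<lambda>w. \<integral>\<^sup>+ wt. f (mask a (Fmap P zs), a, y, mask a (Fmap P wt)) \<partial>K2 w)
        \<in> borel_measurable (K1 a (mask a (Fmap P zs), y))"
      by (subst measurable_cong_sets[OF _ refl]) measurable
    then show "ennreal (q (mask a (Fmap P zs)) a) * (\<integral>\<^sup>+ w. \<integral>\<^sup>+ wt.
        f (mask a (Fmap P zs), a, y, mask a (Fmap P wt)) \<partial>K2 w \<partial>K1 a (mask a (Fmap P zs), y))
      = (\<integral>\<^sup>+ w. obs_weight f a (mask a (Fmap P zs)) y w \<partial>K1 a (mask a (Fmap P zs), y))"
      unfolding obs_weight_def by (rule nn_integral_cmult[symmetric])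
  qed
  finally show ?thesis .
qed

lemma nn_integral_out_law_eq_sum:
  assumes [measurable]: "f \<in> borel_measurable ZAYZS"
  shows "(\<integral>\<^sup>+ x. f x \<partial>out_law P R q NZ K1 K2)
       = (\<Sum>a\<in>UNIV. \<integral>\<^sup>+ zs. \<integral>\<^sup>+ y. \<integral>\<^sup>+ w. obs_weight f a (mask a (Fmap P zs)) y w
            \<partial>K1 a (mask a (Fmap P zs), y) \<partial>Ylaw P R (Fmap P zs) \<partial>NZ)"
proof -
  have "(\<integral>\<^sup>+ x. f x \<partial>out_law P R q NZ K1 K2)
      = (\<integral>\<^sup>+ zs. (\<Sum>a\<in>UNIV. ennreal (q (Fmap P zs) a) * (\<integral>\<^sup>+ y. \<integral>\<^sup>+ w. \<integral>\<^sup>+ wt.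
        f (mask a (Fmap P zs), a, y, mask a (Fmap P wt)) \<partial>K2 w \<partial>K1 a (mask a (Fmap P zs), y)
        \<partial>Ylaw P R (Fmap P zs))) \<partial>NZ)"
    unfolding nn_integral_out_law[OF assms]
    by (intro nn_integral_cong nn_integral_Aker) (simp add: measurable_count_space_eq1)
  also have "\<dots> = (\<integral>\<^sup>+ zs. (\<Sum>a\<in>UNIV. \<integral>\<^sup>+ y. \<integral>\<^sup>+ w. obs_weight f a (mask a (Fmap P zs)) y w
            \<partial>K1 a (mask a (Fmap P zs), y) \<partial>Ylaw P R (Fmap P zs)) \<partial>NZ)"
    by (simp only: q_mult_nn_integral_eq_obs_weight[OF assms])
  also have "\<dots> = (\<Sum>a\<in>UNIV. \<integral>\<^sup>+ zs. \<integral>\<^sup>+ y. \<integral>\<^sup>+ w. obs_weight f a (mask a (Fmap P zs)) y w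
            \<partial>K1 a (mask a (Fmap P zs), y) \<partial>Ylaw P R (Fmap P zs) \<partial>NZ)"
    by (rule nn_integral_sum) measurable
  finally show ?thesis .
qed

lemma out_law_in_prob_algebra: "out_law P R q NZ K1 K2 \<in> space (prob_algebra ZAYZS)"
  unfolding out_law_def
  by (rule measurable_space[OF measurable_bind_prob_space[OF measurable_const[OF truth_in_prob_algebra]],
        of _ _ undefined "count_space UNIV"]) measurable

lemma distr_knockoff_joint_mask_eq_out_law:
  "distr knockoff_joint ZAYZS (\<lambda>(z, zt, y, a). (mask a z, a, y, mask a zt)) = out_law P R q NZ K1 K2"
proof (rule measure_eqI)
  show sets_eq: "sets (distr knockoff_joint ZAYZS (\<lambda>(z, zt, y, a). (mask a z, a, y, mask a zt)))
      = sets (out_law P R q NZ K1 K2)"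
    using out_law_in_prob_algebra by (simp add: space_prob_algebra)
  fix X assume "X \<in> sets (distr knockoff_joint ZAYZS (\<lambda>(z, zt, y, a). (mask a z, a, y, mask a zt)))"
  then have X [measurable]: "X \<in> sets ZAYZS"
    by simp
  have cond: "(\<integral>\<^sup>+ zs. \<integral>\<^sup>+ y. obs_weight (indicator X) a (mask a (Fmap P zs)) y zs \<partial>Ylaw P R (Fmap P zs) \<partial>NZ)
      = (\<integral>\<^sup>+ zs. \<integral>\<^sup>+ y. \<integral>\<^sup>+ w. obs_weight (indicator X) a (mask a (Fmap P zs)) y w
          \<partial>K1 a (mask a (Fmap P zs), y) \<partial>Ylaw P R (Fmap P zs) \<partial>NZ)" for a
    using nn_integral_cond_kernel[of "\<lambda>(zo, y, w). obs_weight (indicator X) a zo y w" a] by simp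
  have "emeasure (distr knockoff_joint ZAYZS (\<lambda>(z, zt, y, a). (mask a z, a, y, mask a zt))) X
      = (\<integral>\<^sup>+ x. indicator X x \<partial>distr knockoff_joint ZAYZS (\<lambda>(z, zt, y, a). (mask a z, a, y, mask a zt)))"
    by simp
  also have "\<dots> = (\<integral>\<^sup>+ x. indicator X x \<partial>out_law P R q NZ K1 K2)"
    unfolding nn_integral_distr_knockoff_joint_mask[OF borel_measurable_indicator[OF X]]
      nn_integral_out_law_eq_sum[OF borel_measurable_indicator[OF X]] cond ..
  also have "\<dots> = emeasure (out_law P R q NZ K1 K2) X"
    using X sets_eq by (metis sets_distr nn_integral_indicator)
  finally show "emeasure (distr knockoff_joint ZAYZS (\<lambda>(z, zt, y, a). (mask a z, a, y, mask a zt))) X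
      = emeasure (out_law P R q NZ K1 K2) X" .
qed

lemma is_knockoff_out_law: "is_knockoff P R (out_law P R q NZ K1 K2)"
  unfolding is_knockoff_def Let_def
proof (rule exI[of _ NZ], rule exI[of _ knockoff_kernel], rule exI[of _ "Aker q"],
    unfold knockoff_joint_def[symmetric], intro conjI allI)
qed (rule gauss_latent knockoff_kernel_measurable Aker_measurable distr_knockoff_joint_mask_eq_out_law
    knockoff_joint_pair_swap_invariant)+

end

theorem proposition1:
  fixes P :: "'p::finite copula" and R :: "('p, 'q::finite) latreg"
    and q :: "real^'p \<Rightarrow> 'p set \<Rightarrow> real"
    and NZ :: "(real^'p) measure" and S :: "real^'p^'p"
    and K1 :: "'p set \<Rightarrow> (real^'p) \<times> ('q \<Rightarrow> nat) \<Rightarrow> (real^'p) measure"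
    and K2 :: "real^'p \<Rightarrow> (real^'p) measure"
  assumes "valid_copula P" and "valid_latreg R" and "valid_missing P R q"
    and "is_gauss (Sig P) NZ"
    and "\<forall>i j. i \<noteq> j \<longrightarrow> S $ i $ j = 0"
    and "\<forall>t. 0 \<le> t \<bullet> (block_G (Sig P) S *v t)"
    and "\<forall>a. cond_kernel P R NZ a (K1 a)"
    and "K2 \<in> ZS \<rightarrow>\<^sub>M prob_algebra ZS"
    and "is_gauss (block_G (Sig P) S) (bind NZ (\<lambda>w. distr (K2 w) borel (join2 w)))"
  shows "is_knockoff P R (out_law P R q NZ K1 K2)"
proof -
  interpret knockoff_setting P R q NZ S K1 K2
    using assms by unfold_locales auto
  show ?thesis
    by (rule is_knockoff_out_law)
qed

end
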